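(* In the setting described in the context, suppose that $J$ satisfies $\sup_{|i-j|\le R}|J_{i,j}|<\infty$ for every $R\ge0$. Let $(n_k)_{k\ge0}$ be an increasing sequence of positive integers, and suppose there is a compact set $K\subset\mathbb{R}$ with $\operatorname{supp}(\mu)\subset K$ and $\operatorname{supp}(\nu_{n_k})\subset K$ for all $k$. If \[ \sup_{k\ge0}\frac1{n_k}\int_{\mathbb{R}}|K_{n_k}(x,x)|\,d\mu(x)<\infty, \] then $\lim_{k\to\infty}\big|\int f\,d\nu_{n_k}-\int f\,d\eta_{n_k}\big|=0$ for every continuous function $f$ on $K$. In particular, for every probability measure $\nu_\infty$ supported on $K$, $\nu_{n_k}\to\nu_\infty$ weakly if and only if $\eta_{n_k}\to\nu_\infty$ weakly (weak convergence meaning convergence of integrals of all bounded continuous functions on $\mathbb{R}$).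
   Context: Let $r\ge1$ and let $\mu_1,\dots,\mu_r$ be positive Borel measures on $\mathbb{R}$ with all moments finite, forming a perfect system: for every $\vec n\in\mathbb{N}_0^r$ there is a monic polynomial $P_{\vec n}$ of degree $|\vec n|=n_1+\dots+n_r$ with $\int x^kP_{\vec n}\,d\mu_j=0$ for $0\le k\le n_j-1$, $1\le j\le r$. Type I polynomials $A_{\vec n}=(A_{\vec n,1},\dots,A_{\vec n,r})$: $\deg A_{\vec n,j}\le n_j-1$, $\sum_j\int x^kA_{\vec n,j}\,d\mu_j=0$ for $0\le k\le|\vec n|-2$, and $=1$ for $k=|\vec n|-1$. Let $\mu$ be a positive measure with $\mu_j\ll\mu$, $w_j=d\mu_j/d\mu$, $Q_{\vec n}=\sum_jA_{\vec n,j}w_j$. Fix a path $(\vec n_\ell)_{\ell\ge0}$ with $|\vec n_\ell|=\ell$, $\vec n_{\ell+1}=\vec n_\ell+\vec e_{i_\ell}$ ($\vec e_j$ the $j$-th unit vector), and set $p_\ell=P_{\vec n_\ell}$, $q_\ell=Q_{\vec n_{\ell+1}}$, so that $\int p_\ell q_{\ell'}\,d\mu=\delta_{\ell,\ell'}$. The Christoffel--Darboux kernel is $K_n(x,y)=\sum_{j=0}^{n-1}p_j(x)q_j(y)$. Define $\nu_n=\frac1n\sum_{y:\,p_n(y)=0}\delta_y$ (zeros counted with multiplicity) and the signed measure $d\eta_n(x)=\frac1nK_n(x,x)\,d\mu(x)$. The matrix $J=[J_{\ell,k}]_{\ell,k\ge0}$ is defined by $xp_\ell=\sum_{k=0}^{\ell+1}J_{\ell,k}p_k$,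 $J_{\ell,k}=0$ for $k>\ell+1$. *)

theory Defs
  imports "HOL-Probability.Probability" "HOL-Computational_Algebra.Polynomial"
begin

text \<open>Multi-indices with r components are functions nat => nat vanishing at j >= r;
  components are indexed 0..r-1 (the paper's 1..r).\<close>

definition msize :: "nat \<Rightarrow> (nat \<Rightarrow> nat) \<Rightarrow> nat" where
  "msize r n = (\<Sum>j<r. n j)"

definition typeII :: "(nat \<Rightarrow> real measure) \<Rightarrow> nat \<Rightarrow> (nat \<Rightarrow> nat) \<Rightarrow> real poly \<Rightarrow> bool" where
  "typeII mu r n P \<longleftrightarrow> lead_coeff P = 1 \<and> degree P = msize r n \<and>
     (\<forall>j<r. \<forall>k<n j. (\<integral>x. x ^ k * poly P x \<partial>mu j) = 0)"

definition perfect_system :: "(nat \<Rightarrow> real measure) \<Rightarrow> nat \<Rightarrow> bool" where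
  "perfect_system mu r \<longleftrightarrow> (\<forall>n. (\<forall>j\<ge>r. n j = 0) \<longrightarrow> (\<exists>!P. typeII mu r n P))"

definition PII :: "(nat \<Rightarrow> real measure) \<Rightarrow> nat \<Rightarrow> (nat \<Rightarrow> nat) \<Rightarrow> real poly" where
  "PII mu r n = (THE P. typeII mu r n P)"

definition typeI :: "(nat \<Rightarrow> real measure) \<Rightarrow> nat \<Rightarrow> (nat \<Rightarrow> nat) \<Rightarrow> (nat \<Rightarrow> real poly) \<Rightarrow> bool" where
  "typeI mu r n A \<longleftrightarrow> (\<forall>j\<ge>r. A j = 0) \<and> (\<forall>j<r. A j = 0 \<or> degree (A j) < n j) \<and>
     (\<forall>k<msize r n. (\<Sum>j<r. \<integral>x. x ^ k * poly (A j) x \<partial>mu j) =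
        (if k = msize r n - 1 then 1 else 0))"

definition AI :: "(nat \<Rightarrow> real measure) \<Rightarrow> nat \<Rightarrow> (nat \<Rightarrow> nat) \<Rightarrow> nat \<Rightarrow> real poly" where
  "AI mu r n = (THE A. typeI mu r n A)"

definition QI :: "(nat \<Rightarrow> real measure) \<Rightarrow> (nat \<Rightarrow> real \<Rightarrow> real) \<Rightarrow> nat \<Rightarrow> (nat \<Rightarrow> nat) \<Rightarrow> real \<Rightarrow> real" where
  "QI mu w r n x = (\<Sum>j<r. poly (AI mu r n j) x * w j x)"

text \<open>The path: n_0 = 0, n_{l+1} = n_l + e_{i l}; so component j of n_l counts the steps m < l with i m = j.\<close>
definition pathv :: "(nat \<Rightarrow> nat) \<Rightarrow> nat \<Rightarrow> nat \<Rightarrow> nat" where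
  "pathv i l j = card {m. m < l \<and> i m = j}"

definition pp :: "(nat \<Rightarrow> real measure) \<Rightarrow> nat \<Rightarrow> (nat \<Rightarrow> nat) \<Rightarrow> nat \<Rightarrow> real poly" where
  "pp mu r i l = PII mu r (pathv i l)"

definition qq :: "(nat \<Rightarrow> real measure) \<Rightarrow> (nat \<Rightarrow> real \<Rightarrow> real) \<Rightarrow> nat \<Rightarrow> (nat \<Rightarrow> nat) \<Rightarrow> nat \<Rightarrow> real \<Rightarrow> real" where
  "qq mu w r i l x = QI mu w r (pathv i (Suc l)) x"

definition CD :: "(nat \<Rightarrow> real measure) \<Rightarrow> (nat \<Rightarrow> real \<Rightarrow> real) \<Rightarrow> nat \<Rightarrow> (nat \<Rightarrow> nat) \<Rightarrow> nat \<Rightarrow> real \<Rightarrow> real \<Rightarrow> real" where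
  "CD mu w r i n x y = (\<Sum>j<n. poly (pp mu r i j) x * qq mu w r i j y)"

text \<open>Integral of f against nu_n (normalized zero counting measure of p_n, with multiplicity;
  used only when all zeros of p_n are real).\<close>
definition nu_int :: "(nat \<Rightarrow> real measure) \<Rightarrow> nat \<Rightarrow> (nat \<Rightarrow> nat) \<Rightarrow> nat \<Rightarrow> (real \<Rightarrow> real) \<Rightarrow> real" where
  "nu_int mu r i n f =
     (\<Sum>y\<in>{y. poly (pp mu r i n) y = 0}. real (order y (pp mu r i n)) * f y) / real n"

text \<open>Integral of f against the signed measure eta_n = (1/n) K_n(x,x) dmu(x), restricted
  to K (which carries mu).\<close>
definition eta_int :: "real measure \<Rightarrow> (nat \<Rightarrow> real measure) \<Rightarrow> (nat \<Rightarrow> real \<Rightarrow> real) \<Rightarrow> nat \<Rightarrow> (nat \<Rightarrow> nat)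
     \<Rightarrow> real set \<Rightarrow> nat \<Rightarrow> (real \<Rightarrow> real) \<Rightarrow> real" where
  "eta_int M mu w r i K n f = (LINT x:K|M. CD mu w r i n x x * f x) / real n"

definition Jm :: "(nat \<Rightarrow> real measure) \<Rightarrow> nat \<Rightarrow> (nat \<Rightarrow> nat) \<Rightarrow> nat \<Rightarrow> nat \<Rightarrow> real" where
  "Jm mu r i l = (THE c. (\<forall>k>Suc l. c k = 0) \<and>
      [:0, 1:] * pp mu r i l = (\<Sum>k\<le>Suc l. smult (c k) (pp mu r i k)))"

end

theory Submission
  imports Defs "HOL-Computational_Algebra.Fundamental_Theorem_Algebra"
begin

text \<open>Both sides are compared through their moments. Since \<open>p\<^sub>n\<close> has only real zeros, the
  \<open>m\<close>-th moment of \<open>\<nu>\<^sub>n\<close> is \<open>1/n\<close> times the \<open>m\<close>-th power sum of these zeros, which is the trace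
  of multiplication by \<open>x\<^sup>m\<close> on polynomials modulo \<open>p\<^sub>n\<close>. In the basis \<open>p\<^sub>0, \<dots>, p\<^bsub>n-1\<^esub>\<close> this map
  is \<open>J\<^sub>n\<^sup>m\<close>, \<open>J\<^sub>n\<close> the \<open>n \<times> n\<close> truncation of the lower Hessenberg recurrence matrix, so the moment
  is \<open>tr(J\<^sub>n\<^sup>m)/n\<close>. By biorthogonality of \<open>p\<^sub>j\<close> and \<open>q\<^sub>j\<close>, the \<open>m\<close>-th moment of \<open>\<eta>\<^sub>n\<close> is
  \<open>(1/n) \<Sum>\<^bsub>j<n\<^esub> (J\<^sup>m)\<^bsub>jj\<^esub>\<close>. For \<open>J\<close> bounded on bands, the two traces differ only in the last \<open>m\<close>
  diagonal entries, so the moments differ by \<open>O(1/n)\<close>. Weierstrass approximation on \<open>K\<close>, with the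
  uniform bound on \<open>(1/n) \<integral> |K\<^sub>n(x,x)| d\<mu>\<close> controlling \<open>\<eta>\<^sub>n\<close>, extends this to continuous
  functions.\<close>

section \<open>Polynomials of bounded degree and monic graded bases\<close>

definition deg_lt :: "nat \<Rightarrow> 'a::zero poly \<Rightarrow> bool" where
  "deg_lt N g \<longleftrightarrow> (\<forall>k\<ge>N. coeff g k = 0)"

lemma deg_lt_iff: "deg_lt N g \<longleftrightarrow> g = 0 \<or> degree g < N"
proof
  assume "deg_lt N g"
  then show "g = 0 \<or> degree g < N"
    unfolding deg_lt_def by (metis leading_coeff_0_iff not_le)
qed (auto simp: deg_lt_def coeff_eq_0)

lemma deg_lt_0 [simp]: "deg_lt N 0"
  by (simp add: deg_lt_def)

lemma deg_lt_add: "deg_lt N g \<Longrightarrow> deg_lt N h \<Longrightarrow> deg_lt N (g + h)"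
  by (simp add: deg_lt_def)

lemma deg_lt_diff: "deg_lt N g \<Longrightarrow> deg_lt N h \<Longrightarrow> deg_lt N (g - h)"
  by (simp add: deg_lt_def)

lemma deg_lt_smult: "deg_lt N g \<Longrightarrow> deg_lt N (smult a g)"
  by (simp add: deg_lt_def)

lemma deg_lt_sum: "(\<And>s. s \<in> S \<Longrightarrow> deg_lt N (g s)) \<Longrightarrow> deg_lt N (\<Sum>s\<in>S. g s)"
  by (induction S rule: infinite_finite_induct) (auto simp: deg_lt_def coeff_sum)

lemma deg_lt_mono: "deg_lt N g \<Longrightarrow> N \<le> N' \<Longrightarrow> deg_lt N' g"
  by (simp add: deg_lt_def)

lemma deg_lt_mod: "P \<noteq> 0 \<Longrightarrow> deg_lt (degree P) (g mod P)"
  unfolding deg_lt_iff using degree_mod_less by blast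

lemma dvd_deg_lt_imp_zero:
  fixes g :: "'a::idom poly"
  assumes "P dvd g" "deg_lt (degree P) g"
  shows "g = 0"
  using assms dvd_imp_degree_le[of P g] unfolding deg_lt_iff by linarith

lemma mod_eqI:
  fixes g h :: "'a::field poly"
  assumes "P \<noteq> 0" "P dvd g - h" "deg_lt (degree P) h"
  shows "g mod P = h"
proof -
  have "P dvd (g - h) - (g - g mod P)"
    using assms(2) dvd_minus_mod by (rule dvd_diff)
  then have "P dvd g mod P - h"
    by (simp add: algebra_simps)
  moreover have "deg_lt (degree P) (g mod P - h)"
    using deg_lt_mod[OF assms(1)] assms(3) by (rule deg_lt_diff)
  ultimately show ?thesis
    using dvd_deg_lt_imp_zero by fastforce
qed

lemma poly_deg_lt:
  fixes g :: "'a::comm_semiring_1 poly"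
  assumes "deg_lt N g"
  shows "poly g x = (\<Sum>k<N. coeff g k * x ^ k)"
proof (cases "g = 0")
  case False
  then have "degree g < N"
    using assms unfolding deg_lt_iff by simp
  have "poly g x = (\<Sum>k<Suc (degree g). coeff g k * x ^ k)"
    unfolding lessThan_Suc_atMost by (rule poly_altdef)
  also have "\<dots> = (\<Sum>k<N. coeff g k * x ^ k)"
    using \<open>degree g < N\<close> by (intro sum.mono_neutral_left) (auto simp: coeff_eq_0)
  finally show ?thesis .
qed simp

lemma smult_sum_right: "smult a (\<Sum>s\<in>S. g s) = (\<Sum>s\<in>S. smult a (g s))"
  by (induction S rule: infinite_finite_induct) (auto simp: smult_add_right)

definition monic_graded :: "(nat \<Rightarrow> 'a::zero_neq_one poly) \<Rightarrow> bool" where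
  "monic_graded b \<longleftrightarrow> (\<forall>l. degree (b l) = l \<and> lead_coeff (b l) = 1)"

context
  fixes b :: "nat \<Rightarrow> 'a::field poly"
begin

definition basis_coord :: "nat \<Rightarrow> 'a poly \<Rightarrow> nat \<Rightarrow> 'a" where
  "basis_coord N g = (THE c. (\<forall>l\<ge>N. c l = 0) \<and> g = (\<Sum>l<N. smult (c l) (b l)))"

definition basis_trace :: "nat \<Rightarrow> ('a poly \<Rightarrow> 'a poly) \<Rightarrow> 'a" where
  "basis_trace N T = (\<Sum>l<N. basis_coord N (T (b l)) l)"

context
  assumes b: "monic_graded b"
begin

lemma monic_graded_degree: "degree (b l) = l"
  and monic_graded_lead_coeff: "coeff (b l) l = 1"
  using b unfolding monic_graded_def by metis+

lemma monic_graded_nonzero: "b l \<noteq> 0"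
  using monic_graded_lead_coeff[of l] by auto

lemma monic_graded_deg_lt: "l < N \<Longrightarrow> deg_lt N (b l)"
  unfolding deg_lt_iff by (simp add: monic_graded_degree)

lemma monic_graded_span: "deg_lt N g \<Longrightarrow> \<exists>c. g = (\<Sum>l<N. smult (c l) (b l))"
proof (induction N arbitrary: g)
  case 0
  then show ?case by (auto simp: deg_lt_def poly_eq_iff)
next
  case (Suc N)
  define h where "h = g - smult (coeff g N) (b N)"
  have "deg_lt N h"
    unfolding deg_lt_def
  proof (intro allI impI)
    fix k assume "N \<le> k"
    show "coeff h k = 0"
    proof (cases "k = N")
      case False
      then have "coeff g k = 0" "coeff (b N) k = 0"
        using Suc.prems \<open>N \<le> k\<close> monic_graded_degree[of N] by (auto simp: deg_lt_def coeff_eq_0)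
      then show ?thesis
        by (simp add: h_def)
    qed (simp add: h_def monic_graded_lead_coeff)
  qed
  then obtain c where "h = (\<Sum>l<N. smult (c l) (b l))"
    using Suc.IH by blast
  moreover have "(\<Sum>l<Suc N. smult ((c(N := coeff g N)) l) (b l))
      = (\<Sum>l<N. smult (c l) (b l)) + smult (coeff g N) (b N)"
    by simp
  ultimately have "g = (\<Sum>l<Suc N. smult ((c(N := coeff g N)) l) (b l))"
    by (simp add: h_def diff_eq_eq)
  then show ?case by blast
qed

lemma monic_graded_independent:
  "(\<Sum>l<N. smult (c l) (b l)) = 0 \<Longrightarrow> l < N \<Longrightarrow> c l = 0"
proof (induction N)
  case 0
  then show ?case by simp
next
  case (Suc N)
  have "deg_lt N (\<Sum>l<N. smult (c l) (b l))"
    by (intro deg_lt_sum deg_lt_smult monic_graded_deg_lt) simp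
  then have "coeff (\<Sum>l<N. smult (c l) (b l)) N = 0"
    by (simp add: deg_lt_def)
  then have "coeff (\<Sum>l<Suc N. smult (c l) (b l)) N = c N"
    by (simp add: monic_graded_lead_coeff)
  then have "c N = 0"
    using Suc.prems(1) by (metis coeff_0)
  then show ?case
    using Suc by (cases "l = N") auto
qed

lemma basis_coord_unique:
  assumes g: "g = (\<Sum>l<N. smult (c l) (b l))" and l: "l < N"
  shows "basis_coord N g l = c l"
proof -
  define c' where "c' l = (if l < N then c l else 0)" for l
  have c': "(\<forall>l\<ge>N. c' l = 0) \<and> g = (\<Sum>l<N. smult (c' l) (b l))"
    using g by (auto simp: c'_def)
  have "d = c'" if "(\<forall>l\<ge>N. d l = 0) \<and> g = (\<Sum>l<N. smult (d l) (b l))" for d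
  proof
    fix l
    have "(\<Sum>l<N. smult (d l - c' l) (b l)) = 0"
      using that c' by (simp add: smult_diff_left sum_subtractf)
    then show "d l = c' l"
      using monic_graded_independent[where c="\<lambda>l. d l - c' l"] that c' by (cases "l < N") auto
  qed
  then have "basis_coord N g = c'"
    unfolding basis_coord_def using c' by (intro the_equality) auto
  then show ?thesis
    using l by (simp add: c'_def)
qed

lemma basis_coord_expand: "deg_lt N g \<Longrightarrow> g = (\<Sum>l<N. smult (basis_coord N g l) (b l))"
proof -
  assume "deg_lt N g"
  then obtain c where c: "g = (\<Sum>l<N. smult (c l) (b l))"
    using monic_graded_span by blast
  also have "\<dots> = (\<Sum>l<N. smult (basis_coord N g l) (b l))"
    using basis_coord_unique[OF c] by simp
  finally show ?thesis .
qed

lemma basis_coord_lincomb: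
  assumes "\<And>s. s \<in> S \<Longrightarrow> deg_lt N (g s)" "l < N"
  shows "basis_coord N (\<Sum>s\<in>S. smult (a s) (g s)) l = (\<Sum>s\<in>S. a s * basis_coord N (g s) l)"
proof (rule basis_coord_unique[OF _ assms(2)])
  have "(\<Sum>s\<in>S. smult (a s) (g s)) = (\<Sum>s\<in>S. smult (a s) (\<Sum>l<N. smult (basis_coord N (g s) l) (b l)))"
    using basis_coord_expand assms(1) by (intro sum.cong) auto
  also have "\<dots> = (\<Sum>l<N. \<Sum>s\<in>S. smult (a s * basis_coord N (g s) l) (b l))"
    by (simp only: smult_sum_right smult_smult sum.swap[of _ S])
  finally show "(\<Sum>s\<in>S. smult (a s) (g s)) = (\<Sum>l<N. smult (\<Sum>s\<in>S. a s * basis_coord N (g s) l) (b l))"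
    by (simp only: smult_sum)
qed

end

end

lemma linear_map_lincomb:
  assumes "\<And>g h. T (g + h) = T g + T h" "\<And>a g. T (smult a g) = smult a (T g)"
  shows "T (\<Sum>s\<in>S. smult (a s) (g s)) = (\<Sum>s\<in>S. smult (a s) (T (g s)))"
proof -
  have "T 0 = 0"
    using assms(2)[of 0 0] by simp
  then show ?thesis
    by (induction S rule: infinite_finite_induct) (auto simp: assms)
qed

lemma basis_trace_change_basis:
  fixes b v :: "nat \<Rightarrow> 'a::field poly"
  assumes b: "monic_graded b" and v: "monic_graded v"
    and T: "\<And>g. deg_lt N g \<Longrightarrow> deg_lt N (T g)"
      "\<And>g h. T (g + h) = T g + T h" "\<And>a g. T (smult a g) = smult a (T g)"
  shows "basis_trace b N T = basis_trace v N T"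
proof -
  let ?cb = "basis_coord b N" and ?cv = "basis_coord v N"
  have Tv: "deg_lt N (T (v s))" if "s < N" for s
    using T(1) monic_graded_deg_lt[OF v that] .
  have "basis_trace b N T = (\<Sum>l<N. \<Sum>s<N. ?cv (b l) s * ?cb (T (v s)) l)"
    unfolding basis_trace_def
  proof (rule sum.cong[OF refl])
    fix l assume "l \<in> {..<N}"
    then have "T (b l) = T (\<Sum>s<N. smult (?cv (b l) s) (v s))"
      using basis_coord_expand[OF v monic_graded_deg_lt[OF b]] by simp
    also have "\<dots> = (\<Sum>s<N. smult (?cv (b l) s) (T (v s)))"
      by (rule linear_map_lincomb[OF T(2,3)])
    finally show "?cb (T (b l)) l = (\<Sum>s<N. ?cv (b l) s * ?cb (T (v s)) l)"
      using basis_coord_lincomb[OF b, of "{..<N}" N "\<lambda>s. T (v s)" l] Tv \<open>l \<in> {..<N}\<close> by simp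
  qed
  also have "\<dots> = (\<Sum>s<N. \<Sum>l<N. ?cb (T (v s)) l * ?cv (b l) s)"
    by (subst sum.swap) (simp add: mult.commute)
  also have "\<dots> = (\<Sum>s<N. ?cv (\<Sum>l<N. smult (?cb (T (v s)) l) (b l)) s)"
  proof (rule sum.cong[OF refl])
    fix s assume "s \<in> {..<N}"
    then show "(\<Sum>l<N. ?cb (T (v s)) l * ?cv (b l) s) = ?cv (\<Sum>l<N. smult (?cb (T (v s)) l) (b l)) s"
      using basis_coord_lincomb[OF v, of "{..<N}" N b s] monic_graded_deg_lt[OF b] by simp
  qed
  also have "\<dots> = basis_trace v N T"
    unfolding basis_trace_def using basis_coord_expand[OF b Tv] by (intro sum.cong) auto
  finally show ?thesis .
qed

section \<open>Multiplication by a power of \<open>x\<close> modulo a polynomial\<close>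

definition mult_xpow_mod :: "'a::field poly \<Rightarrow> nat \<Rightarrow> 'a poly \<Rightarrow> 'a poly" where
  "mult_xpow_mod P m g = (monom 1 m * g) mod P"

lemma mult_xpow_mod_add: "mult_xpow_mod P m (g + h) = mult_xpow_mod P m g + mult_xpow_mod P m h"
  by (simp add: mult_xpow_mod_def distrib_left poly_mod_add_left)

lemma mult_xpow_mod_smult: "mult_xpow_mod P m (smult a g) = smult a (mult_xpow_mod P m g)"
  by (simp add: mult_xpow_mod_def mod_smult_left)

lemma mult_xpow_mod_deg_lt: "P \<noteq> 0 \<Longrightarrow> deg_lt (degree P) (mult_xpow_mod P m g)"
  by (simp add: mult_xpow_mod_def deg_lt_mod)

lemma mult_xpow_mod_0: "degree g < degree P \<Longrightarrow> mult_xpow_mod P 0 g = g"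
  by (simp add: mult_xpow_mod_def mod_poly_less)

lemma mult_xpow_mod_Suc: "mult_xpow_mod P (Suc m) g = ([:0, 1:] * mult_xpow_mod P m g) mod P"
proof -
  have "monom 1 (Suc m) * g = [:0, 1:] * (monom 1 m * g)"
    by (simp add: monom_Suc)
  then show ?thesis
    unfolding mult_xpow_mod_def by (simp only: mod_mult_right_eq)
qed

definition newton_poly :: "(nat \<Rightarrow> 'a::comm_ring_1) \<Rightarrow> nat \<Rightarrow> 'a poly" where
  "newton_poly z s = (\<Prod>t<s. [:- z t, 1:])"

lemma newton_poly_Suc: "newton_poly z (Suc s) = newton_poly z s * [:- z s, 1:]"
  by (simp add: newton_poly_def)

lemma monic_graded_newton_poly: "monic_graded (newton_poly (z :: nat \<Rightarrow> 'a::idom))"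
proof -
  have "degree (newton_poly z l) = l \<and> lead_coeff (newton_poly z l) = 1" for l
  proof (induction l)
    case (Suc l)
    then have "newton_poly z l \<noteq> 0"
      by auto
    then have "degree (newton_poly z (Suc l)) = degree (newton_poly z l) + 1"
      unfolding newton_poly_Suc by (subst degree_mult_eq) auto
    moreover have "lead_coeff (newton_poly z (Suc l)) = lead_coeff (newton_poly z l)"
      unfolding newton_poly_Suc lead_coeff_mult by simp
    ultimately show ?case
      using Suc.IH by auto
  qed (simp add: newton_poly_def)
  then show ?thesis
    unfolding monic_graded_def by blast
qed

lemma newton_poly_dvd: "s \<le> s' \<Longrightarrow> newton_poly z s dvd newton_poly z s'"
proof (induction s' rule: dec_induct)
  case (step s')
  show ?case
    unfolding newton_poly_Suc using step.IH by (rule dvd_mult2)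
qed simp

lemma x_mult_newton_poly:
  "[:0, 1:] * newton_poly z s = newton_poly z (Suc s) + smult (z s) (newton_poly z s)"
  by (simp add: newton_poly_Suc algebra_simps)

text \<open>Since \<open>x n\<^sub>s = n\<^bsub>s+1\<^esub> + z\<^sub>s n\<^sub>s\<close>, multiplication by \<open>x\<close> modulo \<open>n\<^sub>N\<close> is triangular in the
  Newton basis, with the zeros on the diagonal.\<close>
lemma mult_xpow_mod_newton_poly:
  fixes z :: "nat \<Rightarrow> 'a::field"
  assumes s: "s < N"
  obtains h where
    "mult_xpow_mod (newton_poly z N) m (newton_poly z s) = smult (z s ^ m) (newton_poly z s) + h"
    "newton_poly z (Suc s) dvd h" "deg_lt N h"
proof -
  let ?n = "newton_poly z" and ?T = "mult_xpow_mod (newton_poly z N)"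
  have P0: "?n N \<noteq> 0" and dP: "degree (?n N) = N"
    using monic_graded_nonzero monic_graded_degree monic_graded_newton_poly by blast+
  have "\<exists>h. ?T m (?n s) = smult (z s ^ m) (?n s) + h \<and> ?n (Suc s) dvd h \<and> deg_lt N h"
  proof (induction m)
    case 0
    show ?case
      using monic_graded_degree[OF monic_graded_newton_poly, of z s] s dP
      by (intro exI[of _ 0]) (simp add: mult_xpow_mod_0)
  next
    case (Suc m)
    then obtain h where h: "?T m (?n s) = smult (z s ^ m) (?n s) + h" "?n (Suc s) dvd h" "deg_lt N h"
      by blast
    define h' where "h' = smult (z s ^ m) (?n (Suc s)) + [:0, 1:] * h"
    have "[:0, 1:] * ?T m (?n s) = smult (z s ^ Suc m) (?n s) + h'"
      unfolding h(1) h'_def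
      by (simp only: distrib_left mult_smult_right x_mult_newton_poly smult_add_right smult_smult)
        (simp add: power_Suc2 algebra_simps)
    moreover have "deg_lt N (smult (z s ^ Suc m) (?n s))"
      using monic_graded_deg_lt[OF monic_graded_newton_poly s] by (rule deg_lt_smult)
    ultimately have "?T (Suc m) (?n s) = smult (z s ^ Suc m) (?n s) + h' mod ?n N"
      unfolding mult_xpow_mod_Suc
      by (intro mod_eqI[OF P0]) (simp_all add: dvd_minus_mod dP deg_lt_add deg_lt_mod[OF P0, unfolded dP])
    moreover have "?n (Suc s) dvd h' mod ?n N"
      using h(2) newton_poly_dvd[of "Suc s" N z] s unfolding h'_def
      by (intro dvd_mod dvd_add dvd_smult dvd_mult) auto
    ultimately show ?case
      using deg_lt_mod[OF P0, of h'] dP by auto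
  qed
  then show ?thesis
    using that by blast
qed

lemma basis_coord_newton_poly_triangular:
  fixes z :: "nat \<Rightarrow> 'a::field"
  assumes s: "s < N" and dvd: "newton_poly z (Suc s) dvd h" and h: "deg_lt N h"
  shows "basis_coord (newton_poly z) N (smult c (newton_poly z s) + h) s = c"
proof -
  let ?n = "newton_poly z"
  note n = monic_graded_newton_poly[of z]
  define d where "d = basis_coord ?n N h"
  have h_eq: "h = (\<Sum>l<N. smult (d l) (?n l))"
    using basis_coord_expand[OF n h] d_def by blast
  define u where "u = (\<Sum>l<Suc s. smult (d l) (?n l))"
  have split: "{..<N} = {..<Suc s} \<union> {Suc s..<N}"
    using s by auto
  have "h = u + (\<Sum>l\<in>{Suc s..<N}. smult (d l) (?n l))"
    unfolding h_eq u_def split by (rule sum.union_disjoint) auto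
  moreover have "?n (Suc s) dvd (\<Sum>l\<in>{Suc s..<N}. smult (d l) (?n l))"
    by (intro dvd_sum dvd_smult newton_poly_dvd) auto
  ultimately have "?n (Suc s) dvd u"
    using dvd by (metis add_diff_cancel_right' dvd_diff)
  moreover have "deg_lt (degree (?n (Suc s))) u"
    unfolding u_def monic_graded_degree[OF n]
    by (intro deg_lt_sum deg_lt_smult monic_graded_deg_lt[OF n]) auto
  ultimately have "u = 0"
    by (rule dvd_deg_lt_imp_zero)
  then have "d s = 0"
    using monic_graded_independent[OF n, where N="Suc s" and c=d and l=s] unfolding u_def by simp
  have "(\<Sum>l<N. smult ((d(s := c)) l) (?n l))
      = (\<Sum>l<N. smult (d l) (?n l) + (if l = s then smult c (?n s) else 0))"
    using \<open>d s = 0\<close> by (intro sum.cong) auto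
  also have "\<dots> = smult c (?n s) + h"
    using s by (simp add: sum.distrib h_eq)
  finally show ?thesis
    using basis_coord_unique[OF n _ s] by (metis fun_upd_same)
qed

lemma basis_trace_mult_xpow_mod_newton_poly:
  fixes z :: "nat \<Rightarrow> 'a::field"
  shows "basis_trace (newton_poly z) N (mult_xpow_mod (newton_poly z N) m) = (\<Sum>s<N. z s ^ m)"
  unfolding basis_trace_def
proof (rule sum.cong[OF refl])
  fix s assume "s \<in> {..<N}"
  then obtain h where
    "mult_xpow_mod (newton_poly z N) m (newton_poly z s) = smult (z s ^ m) (newton_poly z s) + h"
    "newton_poly z (Suc s) dvd h" "deg_lt N h"
    using mult_xpow_mod_newton_poly by blast
  then show "basis_coord (newton_poly z) N (mult_xpow_mod (newton_poly z N) m (newton_poly z s)) s = z s ^ m"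
    using basis_coord_newton_poly_triangular \<open>s \<in> {..<N}\<close> by simp
qed

section \<open>Powers of lower Hessenberg matrices and their truncations\<close>

lemma abs_sum_le_card_support:
  fixes f :: "'b \<Rightarrow> real"
  assumes "finite S" "finite I" "B \<ge> 0"
    and "\<And>t. t \<in> S \<Longrightarrow> t \<notin> I \<Longrightarrow> f t = 0" "\<And>t. t \<in> S \<Longrightarrow> t \<in> I \<Longrightarrow> \<bar>f t\<bar> \<le> B"
  shows "\<bar>\<Sum>t\<in>S. f t\<bar> \<le> real (card I) * B"
proof -
  have "(\<Sum>t\<in>S. f t) = (\<Sum>t\<in>S \<inter> I. f t)"
    using assms(1,4) by (intro sum.mono_neutral_right) auto
  also have "\<bar>\<dots>\<bar> \<le> (\<Sum>t\<in>S \<inter> I. B)"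
    using assms(5) by (intro order_trans[OF sum_abs sum_mono]) auto
  also have "\<dots> \<le> real (card I) * B"
    using assms(2,3) by (auto intro!: mult_right_mono card_mono)
  finally show ?thesis .
qed

definition lower_hessenberg :: "(nat \<Rightarrow> nat \<Rightarrow> 'a::zero) \<Rightarrow> bool" where
  "lower_hessenberg J \<longleftrightarrow> (\<forall>t k. Suc t < k \<longrightarrow> J t k = 0)"

definition band_bounded :: "(nat \<Rightarrow> nat \<Rightarrow> real) \<Rightarrow> bool" where
  "band_bounded J \<longleftrightarrow> (\<forall>R::real. R \<ge> 0 \<longrightarrow> (\<exists>B. \<forall>a b. \<bar>real a - real b\<bar> \<le> R \<longrightarrow> \<bar>J a b\<bar> \<le> B))"

text \<open>Entries of the \<open>m\<close>-th power of the \<open>N \<times> N\<close> truncation of \<open>J\<close>, and of the \<open>m\<close>-th power of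
  \<open>J\<close> itself: for lower Hessenberg \<open>J\<close>, row \<open>l\<close> of \<open>J\<^sup>m\<close> vanishes beyond column \<open>l + m\<close>, so the
  matrix product only needs a finite sum.\<close>
fun trunc_pow :: "(nat \<Rightarrow> nat \<Rightarrow> 'a::comm_semiring_1) \<Rightarrow> nat \<Rightarrow> nat \<Rightarrow> nat \<Rightarrow> nat \<Rightarrow> 'a" where
  "trunc_pow J N 0 l k = (if l = k then 1 else 0)"
| "trunc_pow J N (Suc m) l k = (\<Sum>t<N. trunc_pow J N m l t * J t k)"

fun hessenberg_pow :: "(nat \<Rightarrow> nat \<Rightarrow> 'a::comm_semiring_1) \<Rightarrow> nat \<Rightarrow> nat \<Rightarrow> nat \<Rightarrow> 'a" where
  "hessenberg_pow J 0 l k = (if l = k then 1 else 0)"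
| "hessenberg_pow J (Suc m) l k = (\<Sum>t<Suc (l + m). hessenberg_pow J m l t * J t k)"

context
  fixes J :: "nat \<Rightarrow> nat \<Rightarrow> 'a::comm_semiring_1"
  assumes J: "lower_hessenberg J"
begin

lemma hessenberg_entry_eq_0: "Suc t < k \<Longrightarrow> J t k = 0"
  using J unfolding lower_hessenberg_def by blast

lemma trunc_pow_eq_0: "l + m < k \<Longrightarrow> trunc_pow J N m l k = 0"
proof (induction m arbitrary: k)
  case (Suc m)
  have "trunc_pow J N m l t * J t k = 0" for t
    using Suc hessenberg_entry_eq_0[of t k] by (cases "l + m < t") auto
  then show ?case
    by simp
qed simp

lemma trunc_pow_eq_hessenberg_pow: "l + m \<le> N \<Longrightarrow> trunc_pow J N m l k = hessenberg_pow J m l k"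
proof (induction m arbitrary: k)
  case (Suc m)
  have "trunc_pow J N (Suc m) l k = (\<Sum>t<Suc (l + m). trunc_pow J N m l t * J t k)"
    unfolding trunc_pow.simps using Suc.prems trunc_pow_eq_0
    by (intro sum.mono_neutral_right) auto
  also have "\<dots> = hessenberg_pow J (Suc m) l k"
    using Suc by simp
  finally show ?case .
qed simp

end

lemma trunc_pow_band_bound:
  fixes J :: "nat \<Rightarrow> nat \<Rightarrow> real"
  assumes J: "lower_hessenberg J" and bounded: "band_bounded J"
  shows "\<exists>C\<ge>0. \<forall>N l k. l \<le> k + d \<longrightarrow> \<bar>trunc_pow J N m l k\<bar> \<le> C"
proof (induction m arbitrary: d)
  case 0
  show ?case by (intro exI[of _ 1]) auto
next
  case (Suc m)
  obtain C where C: "C \<ge> 0" "\<And>N l k. l \<le> k + Suc d \<Longrightarrow> \<bar>trunc_pow J N m l k\<bar> \<le> C"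
    using Suc.IH[of "Suc d"] by blast
  obtain B0 where B0: "\<And>a b. \<bar>real a - real b\<bar> \<le> real (d + m + 1) \<Longrightarrow> \<bar>J a b\<bar> \<le> B0"
    using bounded unfolding band_bounded_def by (metis of_nat_0_le_iff)
  define B where "B = max B0 0"
  have B: "B \<ge> 0" "\<And>a b. \<bar>real a - real b\<bar> \<le> real (d + m + 1) \<Longrightarrow> \<bar>J a b\<bar> \<le> B"
    using B0 unfolding B_def by force+
  have "\<bar>trunc_pow J N (Suc m) l k\<bar> \<le> real (d + m + 2) * (C * B)" if lk: "l \<le> k + d" for N l k
  proof -
    have "\<bar>\<Sum>t<N. trunc_pow J N m l t * J t k\<bar> \<le> real (card {k - 1 .. k + d + m}) * (C * B)"
    proof (rule abs_sum_le_card_support)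
      fix t assume "t \<in> {..<N}"
      show "trunc_pow J N m l t * J t k = 0" if "t \<notin> {k - 1 .. k + d + m}"
        using that lk trunc_pow_eq_0[OF J, of l m t N] hessenberg_entry_eq_0[OF J, of t k] by force
      show "\<bar>trunc_pow J N m l t * J t k\<bar> \<le> C * B" if "t \<in> {k - 1 .. k + d + m}"
        using that lk C B by (auto simp: abs_mult intro!: mult_mono)
    qed (use C B in auto)
    also have "\<dots> \<le> real (d + m + 2) * (C * B)"
      using C B by (intro mult_right_mono) auto
    finally show ?thesis
      by simp
  qed
  then show ?case
    using C B by (intro exI[of _ "real (d + m + 2) * (C * B)"]) auto
qed

text \<open>Only the last \<open>m\<close> diagonal entries of \<open>J\<^sup>m\<close> feel the truncation.\<close>
lemma trace_trunc_pow_minus_trace_bounded: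
  fixes J :: "nat \<Rightarrow> nat \<Rightarrow> real"
  assumes J: "lower_hessenberg J" and bounded: "band_bounded J"
  shows "\<exists>C. \<forall>N. \<bar>(\<Sum>l<N. trunc_pow J N m l l) - (\<Sum>l<N. hessenberg_pow J m l l)\<bar> \<le> C"
proof -
  obtain C where C: "C \<ge> 0" "\<And>N l k. l \<le> k + 0 \<Longrightarrow> \<bar>trunc_pow J N m l k\<bar> \<le> C"
    using trunc_pow_band_bound[OF J bounded, of 0 m] by blast
  have "\<bar>\<Sum>l<N. trunc_pow J N m l l - hessenberg_pow J m l l\<bar> \<le> real m * (2 * C)" for N
  proof -
    have "\<bar>\<Sum>l<N. trunc_pow J N m l l - hessenberg_pow J m l l\<bar> \<le> real (card {N - m..<N}) * (2 * C)"
    proof (rule abs_sum_le_card_support)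
      fix l assume "l \<in> {..<N}"
      show "trunc_pow J N m l l - hessenberg_pow J m l l = 0" if "l \<notin> {N - m..<N}"
        using that \<open>l \<in> {..<N}\<close> trunc_pow_eq_hessenberg_pow[OF J] by simp
      show "\<bar>trunc_pow J N m l l - hessenberg_pow J m l l\<bar> \<le> 2 * C"
        using C(2)[of l l N] C(2)[of l l "l + m"] trunc_pow_eq_hessenberg_pow[OF J, of l m "l + m" l]
        by auto
    qed (use C in auto)
    also have "\<dots> \<le> real m * (2 * C)"
      using C by (intro mult_right_mono) auto
    finally show ?thesis .
  qed
  then show ?thesis
    by (intro exI[of _ "real m * (2 * C)"]) (simp add: sum_subtractf)
qed

definition hessenberg_recurrence :: "(nat \<Rightarrow> 'a::comm_ring_1 poly) \<Rightarrow> (nat \<Rightarrow> nat \<Rightarrow> 'a) \<Rightarrow> bool" where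
  "hessenberg_recurrence b J \<longleftrightarrow> (\<forall>k. [:0, 1:] * b k = (\<Sum>t<Suc (Suc k). smult (J k t) (b t)))"

context
  fixes J :: "nat \<Rightarrow> nat \<Rightarrow> 'a::field" and b :: "nat \<Rightarrow> 'a poly"
  assumes J: "lower_hessenberg J" and rec: "hessenberg_recurrence b J"
begin

lemma x_mult_recurrence:
  assumes "Suc k < K"
  shows "[:0, 1:] * b k = (\<Sum>t<K. smult (J k t) (b t))"
  unfolding rec[unfolded hessenberg_recurrence_def, rule_format]
  using assms hessenberg_entry_eq_0[OF J, of k] by (intro sum.mono_neutral_left) auto

lemma xpow_mult_recurrence:
  "monom 1 m * b l = (\<Sum>k<Suc (l + m). smult (hessenberg_pow J m l k) (b k))"
proof (induction m)
  case 0
  have "(\<Sum>k<Suc l. smult (hessenberg_pow J 0 l k) (b k)) = (\<Sum>k<Suc l. if k = l then b k else 0)"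
    by (intro sum.cong) auto
  then show ?case by simp
next
  case (Suc m)
  have "monom 1 (Suc m) * b l = [:0, 1:] * (monom 1 m * b l)"
    by (simp add: monom_Suc)
  also have "\<dots> = (\<Sum>t<Suc (l + m). smult (hessenberg_pow J m l t) ([:0, 1:] * b t))"
    unfolding Suc by (simp only: sum_distrib_left mult_smult_right)
  also have "\<dots> = (\<Sum>t<Suc (l + m). \<Sum>k<Suc (l + Suc m). smult (hessenberg_pow J m l t * J t k) (b k))"
  proof (rule sum.cong[OF refl])
    fix t assume "t \<in> {..<Suc (l + m)}"
    then have "[:0, 1:] * b t = (\<Sum>k<Suc (l + Suc m). smult (J t k) (b k))"
      by (intro x_mult_recurrence) simp
    then show "smult (hessenberg_pow J m l t) ([:0, 1:] * b t)
        = (\<Sum>k<Suc (l + Suc m). smult (hessenberg_pow J m l t * J t k) (b k))"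
      by (simp only: smult_sum_right smult_smult)
  qed
  also have "\<dots> = (\<Sum>k<Suc (l + Suc m). smult (hessenberg_pow J (Suc m) l k) (b k))"
    by (subst sum.swap) (simp only: smult_sum hessenberg_pow.simps)
  finally show ?case .
qed

context
  assumes b: "monic_graded b"
begin

text \<open>The only term of the recurrence leaving the span of \<open>b 0, \<dots>, b (N - 1)\<close> is a multiple of
  \<open>b N\<close>, which vanishes modulo \<open>b N\<close>.\<close>
lemma mult_xpow_mod_recurrence:
  assumes l: "l < N"
  shows "mult_xpow_mod (b N) m (b l) = (\<Sum>k<N. smult (trunc_pow J N m l k) (b k))"
proof (induction m)
  case 0
  have "(\<Sum>k<N. smult (trunc_pow J N 0 l k) (b k)) = (\<Sum>k<N. if k = l then b k else 0)"
    by (intro sum.cong) auto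
  then show ?case
    using l monic_graded_degree[OF b] by (simp add: mult_xpow_mod_0)
next
  case (Suc m)
  have bN: "b N \<noteq> 0" "degree (b N) = N"
    using monic_graded_nonzero[OF b] monic_graded_degree[OF b] by auto
  define c where "c = (\<Sum>k<N. trunc_pow J N m l k * J k N)"
  have "[:0, 1:] * mult_xpow_mod (b N) m (b l) = (\<Sum>k<N. smult (trunc_pow J N m l k) ([:0, 1:] * b k))"
    unfolding Suc by (simp only: sum_distrib_left mult_smult_right)
  also have "\<dots> = (\<Sum>k<N. smult (trunc_pow J N m l k) ((\<Sum>t<N. smult (J k t) (b t)) + smult (J k N) (b N)))"
    using x_mult_recurrence[of _ "Suc N"] by (intro sum.cong) auto
  also have "\<dots> = (\<Sum>k<N. \<Sum>t<N. smult (trunc_pow J N m l k * J k t) (b t)) + smult c (b N)"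
    by (simp only: smult_add_right smult_sum_right smult_smult sum.distrib c_def smult_sum)
  also have "(\<Sum>k<N. \<Sum>t<N. smult (trunc_pow J N m l k * J k t) (b t))
      = (\<Sum>t<N. smult (trunc_pow J N (Suc m) l t) (b t))"
    by (subst sum.swap) (simp only: smult_sum trunc_pow.simps)
  finally have "[:0, 1:] * mult_xpow_mod (b N) m (b l)
      = (\<Sum>t<N. smult (trunc_pow J N (Suc m) l t) (b t)) + smult c (b N)" .
  moreover have "deg_lt (degree (b N)) (\<Sum>t<N. smult (trunc_pow J N (Suc m) l t) (b t))"
    unfolding bN by (intro deg_lt_sum deg_lt_smult monic_graded_deg_lt[OF b]) simp
  ultimately show ?case
    unfolding mult_xpow_mod_Suc by (intro mod_eqI[OF bN(1)]) (simp_all add: dvd_smult)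
qed

lemma basis_trace_mult_xpow_mod_recurrence:
  "basis_trace b N (mult_xpow_mod (b N) m) = (\<Sum>l<N. trunc_pow J N m l l)"
  unfolding basis_trace_def
  by (intro sum.cong refl basis_coord_unique[OF b] mult_xpow_mod_recurrence) auto

end

end

section \<open>Monic polynomials with real zeros\<close>

lemma map_poly_of_real_mult:
  "map_poly (of_real :: real \<Rightarrow> 'a::{comm_ring_1, real_algebra_1}) (p * q) = map_poly of_real p * map_poly of_real q"
  by (simp add: poly_eq_iff coeff_map_poly coeff_mult)

lemma poly_map_poly_of_real:
  "poly (map_poly (of_real :: real \<Rightarrow> 'a::{comm_ring_1, real_algebra_1}) p) (of_real x) = of_real (poly p x)"
  by (induction p) (auto simp: map_poly_pCons)

lemma monic_real_poly_linear_factor: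
  fixes P :: "real poly"
  assumes lead: "lead_coeff P = 1" and deg: "degree P = Suc d"
    and zeros: "\<forall>w. poly (map_poly complex_of_real P) w = 0 \<longrightarrow> w \<in> complex_of_real ` K"
  obtains y Q where "y \<in> K" "P = Q * [:-y, 1:]" "lead_coeff Q = 1" "degree Q = d"
    "\<forall>w. poly (map_poly complex_of_real Q) w = 0 \<longrightarrow> w \<in> complex_of_real ` K"
proof -
  have "degree (map_poly complex_of_real P) = Suc d"
    using deg by (subst degree_map_poly) simp_all
  then obtain w where w: "poly (map_poly complex_of_real P) w = 0"
    using fundamental_theorem_of_algebra constant_degree by (metis nat.distinct(1))
  then obtain y where y: "y \<in> K" "w = complex_of_real y"
    using zeros by blast
  then have "poly P y = 0"
    using w poly_map_poly_of_real[where 'a=complex, of P y] by simp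
  then have "[:-y, 1:] dvd P"
    by (simp add: dvd_iff_poly_eq_0)
  then obtain Q where Q: "P = [:-y, 1:] * Q"
    by (elim dvdE)
  have "Q \<noteq> 0"
    using Q lead by auto
  then have "degree P = degree [:-y, 1:] + degree Q"
    unfolding Q by (intro degree_mult_eq) auto
  then have "degree Q = d"
    using deg by simp
  have "lead_coeff P = lead_coeff [:-y, 1:] * lead_coeff Q"
    unfolding Q by (rule lead_coeff_mult)
  then have "lead_coeff Q = 1"
    using lead by simp
  have "\<forall>w. poly (map_poly complex_of_real Q) w = 0 \<longrightarrow> w \<in> complex_of_real ` K"
    using zeros unfolding Q map_poly_of_real_mult by simp
  moreover have "P = Q * [:-y, 1:]"
    using Q by (simp only: mult.commute)
  ultimately show ?thesis
    using that y(1) \<open>lead_coeff Q = 1\<close> \<open>degree Q = d\<close> by blast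
qed

lemma monic_real_poly_splits:
  fixes P :: "real poly"
  assumes "lead_coeff P = 1"
    and "\<forall>w. poly (map_poly complex_of_real P) w = 0 \<longrightarrow> w \<in> complex_of_real ` K"
  obtains z where "\<forall>t<degree P. z t \<in> K" "P = newton_poly z (degree P)"
proof -
  have "\<exists>z. (\<forall>t<degree P. z t \<in> K) \<and> P = newton_poly z (degree P)"
    using assms
  proof (induction "degree P" arbitrary: P)
    case 0
    then have "P = 1"
      using degree_0_id[of P] by (simp add: one_pCons)
    then show ?case
      using 0 by (auto simp: newton_poly_def)
  next
    case (Suc d P)
    obtain y Q where y: "y \<in> K" and Q: "P = Q * [:-y, 1:]" "lead_coeff Q = 1" "degree Q = d"
        "\<forall>w. poly (map_poly complex_of_real Q) w = 0 \<longrightarrow> w \<in> complex_of_real ` K"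
      using monic_real_poly_linear_factor[OF Suc.prems(1) Suc.hyps(2)[symmetric] Suc.prems(2)] by blast
    then obtain z where z: "\<forall>t<d. z t \<in> K" "Q = newton_poly z d"
      using Suc.hyps(1)[of Q] by auto
    have "newton_poly (z(d := y)) d = newton_poly z d"
      unfolding newton_poly_def by (intro prod.cong) auto
    then have "newton_poly (z(d := y)) (Suc d) = Q * [:-y, 1:]"
      unfolding newton_poly_Suc z(2) by simp
    then have "P = newton_poly (z(d := y)) (degree P)"
      using Q(1) Suc.hyps(2) by metis
    moreover have "\<forall>t<degree P. (z(d := y)) t \<in> K"
      using z(1) y Suc.hyps(2) by (auto simp: less_Suc_eq)
    ultimately show ?case
      by blast
  qed
  then show ?thesis
    using that by blast
qed

lemma order_newton_poly:
  fixes z :: "nat \<Rightarrow> 'a::field"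
  shows "order y (newton_poly z N) = card {t. t < N \<and> z t = y}"
proof (induction N)
  case 0
  then show ?case by (simp add: newton_poly_def order_0I)
next
  case (Suc N)
  have ne: "newton_poly z N * [:- z N, 1:] \<noteq> 0"
    using monic_graded_nonzero[OF monic_graded_newton_poly, of z "Suc N"] unfolding newton_poly_Suc .
  have linear: "order y [:- z N, 1:] = (if z N = y then 1 else 0)"
    using order_power_n_n[of y 1] by (auto intro: order_0I)
  have "{t. t < Suc N \<and> z t = y} = {t. t < N \<and> z t = y} \<union> (if z N = y then {N} else {})"
    by (auto simp: less_Suc_eq)
  then have "card {t. t < Suc N \<and> z t = y} = card {t. t < N \<and> z t = y} + (if z N = y then 1 else 0)"
    by (auto simp: card_insert_if)
  then show ?case
    unfolding newton_poly_Suc order_mult[OF ne] linear Suc.IH by simp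
qed

lemma zeros_newton_poly: "{y. poly (newton_poly (z :: nat \<Rightarrow> 'a::idom) N) y = 0} = z ` {..<N}"
  unfolding newton_poly_def poly_prod by (auto simp: prod_zero_iff)

lemma sum_zeros_newton_poly:
  fixes z :: "nat \<Rightarrow> 'a::field" and h :: "'a \<Rightarrow> 'b::semiring_1"
  shows "(\<Sum>y\<in>{y. poly (newton_poly z N) y = 0}. of_nat (order y (newton_poly z N)) * h y) = (\<Sum>t<N. h (z t))"
proof -
  have "(\<Sum>t<N. h (z t)) = (\<Sum>y\<in>z ` {..<N}. \<Sum>t\<in>{t. t \<in> {..<N} \<and> z t = y}. h (z t))"
    by (rule sum.image_gen) simp
  also have "\<dots> = (\<Sum>y\<in>z ` {..<N}. of_nat (card {t. t < N \<and> z t = y}) * h y)"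
    by (intro sum.cong refl) auto
  finally show ?thesis
    unfolding zeros_newton_poly order_newton_poly by simp
qed

section \<open>Multiple orthogonal polynomials along a path\<close>

locale mop_path =
  fixes r :: nat and mu :: "nat \<Rightarrow> real measure" and i :: "nat \<Rightarrow> nat"
  assumes moments: "\<And>j k. j < r \<Longrightarrow> integrable (mu j) (\<lambda>x. x ^ k)"
    and perfect: "perfect_system mu r"
    and path: "\<And>l. i l < r"
begin

abbreviation p :: "nat \<Rightarrow> real poly" where
  "p l \<equiv> pp mu r i l"

abbreviation index :: "nat \<Rightarrow> nat \<Rightarrow> nat" where
  "index L \<equiv> pathv i L"

lemma integrable_poly: "j < r \<Longrightarrow> integrable (mu j) (\<lambda>x. poly Q x)"
  unfolding poly_altdef by (intro Bochner_Integration.integrable_sum integrable_mult_right moments)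

lemma integrable_poly_mult: "j < r \<Longrightarrow> integrable (mu j) (\<lambda>x. poly Q x * poly A x)"
  using integrable_poly[of j "Q * A"] by (simp add: poly_mult)

lemma integrable_power_mult_poly: "j < r \<Longrightarrow> integrable (mu j) (\<lambda>x. x ^ k * poly A x)"
  using integrable_poly[of j "monom 1 k * A"] by (simp add: poly_mult poly_monom)

lemma index_Suc: "index (Suc L) j = index L j + (if i L = j then 1 else 0)"
proof -
  have "{m. m < Suc L \<and> i m = j} = {m. m < L \<and> i m = j} \<union> (if i L = j then {L} else {})"
    by (auto simp: less_Suc_eq)
  then show ?thesis
    unfolding pathv_def by (auto simp: card_insert_if)
qed

lemma index_eq_0: "r \<le> j \<Longrightarrow> index L j = 0"
  unfolding pathv_def using path by (metis (mono_tags, lifting) card.empty Collect_empty_eq leD)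

lemma msize_index: "msize r (index L) = L"
proof (induction L)
  case (Suc L)
  have "(\<Sum>j<r. if i L = j then 1 else 0) = (1::nat)"
    using path by simp
  then show ?case
    using Suc unfolding msize_def index_Suc by (simp add: sum.distrib)
qed (simp add: msize_def pathv_def)

lemma index_mono: "L \<le> L' \<Longrightarrow> index L j \<le> index L' j"
  unfolding pathv_def by (intro card_mono) auto

lemma ex1_typeII: "\<exists>!P. typeII mu r (index L) P"
  using perfect index_eq_0 unfolding perfect_system_def by blast

lemma typeII_p: "typeII mu r (index L) (p L)"
  unfolding pp_def PII_def using ex1_typeII by (rule theI')

lemma typeII_imp_eq_p: "typeII mu r (index L) P \<Longrightarrow> P = p L"
  using ex1_typeII typeII_p by blast

lemma monic_graded_p: "monic_graded p"
  using typeII_p msize_index unfolding monic_graded_def typeII_def by metis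

lemma p_orthogonal: "j < r \<Longrightarrow> k < index L j \<Longrightarrow> (\<integral>x. x ^ k * poly (p L) x \<partial>mu j) = 0"
  using typeII_p unfolding typeII_def by blast

text \<open>\<open>pairing Q A = \<integral> Q (\<Sum>\<^sub>j A\<^sub>j w\<^sub>j) d\<mu>\<close>, written with the measures \<open>\<mu>\<^sub>j = w\<^sub>j \<mu>\<close> so that no
  reference measure is needed.\<close>
definition pairing :: "real poly \<Rightarrow> (nat \<Rightarrow> real poly) \<Rightarrow> real" where
  "pairing Q A = (\<Sum>j<r. \<integral>x. poly Q x * poly (A j) x \<partial>mu j)"

lemma pairing_sum_left: "pairing (\<Sum>s\<in>S. smult (c s) (Q s)) A = (\<Sum>s\<in>S. c s * pairing (Q s) A)"
proof (induction S rule: infinite_finite_induct)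
  case (insert s S)
  have "pairing (smult (c s) (Q s) + R) A = c s * pairing (Q s) A + pairing R A" for R
    unfolding pairing_def
    by (simp add: distrib_right integral_add integrable_poly_mult sum.distrib sum_distrib_left mult.assoc)
  then show ?case
    using insert by simp
qed (simp_all add: pairing_def)

lemma pairing_diff_right: "pairing Q (\<lambda>j. A j - B j) = pairing Q A - pairing Q B"
  unfolding pairing_def by (simp add: right_diff_distrib integral_diff integrable_poly_mult sum_subtractf)

lemma pairing_add_right: "pairing Q (\<lambda>j. A j + B j) = pairing Q A + pairing Q B"
  unfolding pairing_def by (simp add: distrib_left integral_add integrable_poly_mult sum.distrib)

lemma pairing_smult_right: "pairing Q (\<lambda>j. smult c (A j)) = c * pairing Q A"
  unfolding pairing_def by (simp add: sum_distrib_left mult.left_commute)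

lemma pairing_expand: "pairing Q A = (\<Sum>k\<le>degree Q. coeff Q k * pairing (monom 1 k) A)"
proof -
  have "Q = (\<Sum>k\<le>degree Q. smult (coeff Q k) (monom 1 k))"
    using poly_as_sum_of_monoms[of Q] by (simp add: smult_monom)
  then show ?thesis
    by (metis pairing_sum_left)
qed

definition typeI_shape :: "nat \<Rightarrow> (nat \<Rightarrow> real poly) \<Rightarrow> bool" where
  "typeI_shape L A \<longleftrightarrow> (\<forall>j\<ge>r. A j = 0) \<and> (\<forall>j<r. deg_lt (index L j) (A j))"

lemma typeI_shape_mono: "typeI_shape L A \<Longrightarrow> L \<le> L' \<Longrightarrow> typeI_shape L' A"
  unfolding typeI_shape_def using index_mono deg_lt_mono by blast

lemma typeI_shape_add: "typeI_shape L A \<Longrightarrow> typeI_shape L B \<Longrightarrow> typeI_shape L (\<lambda>j. A j + B j)"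
  unfolding typeI_shape_def by (auto intro: deg_lt_add)

lemma typeI_shape_diff: "typeI_shape L A \<Longrightarrow> typeI_shape L B \<Longrightarrow> typeI_shape L (\<lambda>j. A j - B j)"
  unfolding typeI_shape_def by (auto intro: deg_lt_diff)

lemma typeI_shape_smult: "typeI_shape L A \<Longrightarrow> typeI_shape L (\<lambda>j. smult c (A j))"
  unfolding typeI_shape_def by (auto intro: deg_lt_smult)

lemma pairing_p_typeI_shape: "typeI_shape L A \<Longrightarrow> pairing (p L) A = 0"
  unfolding pairing_def
proof (intro sum.neutral ballI)
  fix j assume A: "typeI_shape L A" and "j \<in> {..<r}"
  then have "deg_lt (index L j) (A j)"
    unfolding typeI_shape_def by simp
  then have "(\<integral>x. poly (p L) x * poly (A j) x \<partial>mu j)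
      = (\<integral>x. (\<Sum>k<index L j. coeff (A j) k * (x ^ k * poly (p L) x)) \<partial>mu j)"
    by (simp add: poly_deg_lt sum_distrib_left sum_distrib_right mult_ac)
  also have "\<dots> = (\<Sum>k<index L j. coeff (A j) k * (\<integral>x. x ^ k * poly (p L) x \<partial>mu j))"
    using \<open>j \<in> {..<r}\<close> by (simp add: integrable_power_mult_poly)
  also have "\<dots> = 0"
    using \<open>j \<in> {..<r}\<close> p_orthogonal by simp
  finally show "(\<integral>x. poly (p L) x * poly (A j) x \<partial>mu j) = 0" .
qed

text \<open>The vector \<open>x\<^sup>d e\<^sub>i\<close> by which \<open>typeI_shape (Suc L)\<close> exceeds \<open>typeI_shape L\<close>, where
  \<open>i = i L\<close> and \<open>d = n\<^sub>L(i)\<close>.\<close>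
definition step_vector :: "nat \<Rightarrow> nat \<Rightarrow> real poly" where
  "step_vector L j = (if j = i L then monom 1 (index L (i L)) else 0)"

definition step_moment :: "nat \<Rightarrow> real" where
  "step_moment L = (\<integral>x. x ^ index L (i L) * poly (p L) x \<partial>mu (i L))"

lemma typeI_shape_step_vector: "typeI_shape (Suc L) (step_vector L)"
  unfolding typeI_shape_def step_vector_def deg_lt_def index_Suc
  using path[of L] by (auto simp: coeff_monom)

lemma pairing_step_vector: "pairing Q (step_vector L) = (\<integral>x. poly Q x * x ^ index L (i L) \<partial>mu (i L))"
proof -
  have "pairing Q (step_vector L) = (\<Sum>j<r. if j = i L then (\<integral>x. poly Q x * x ^ index L (i L) \<partial>mu j) else 0)"
    unfolding pairing_def step_vector_def by (intro sum.cong) (auto simp: poly_monom)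
  then show ?thesis
    using path by (simp add: sum.delta')
qed

lemma pairing_p_step_vector: "pairing (p L) (step_vector L) = step_moment L"
  unfolding pairing_step_vector step_moment_def by (simp add: mult.commute)

text \<open>If the step moment vanished, \<open>p (Suc L) + p L\<close> would be a second type II polynomial for the
  multi-index \<open>n\<^bsub>L+1\<^esub>\<close>.\<close>
lemma step_moment_nonzero: "step_moment L \<noteq> 0"
proof
  assume moment: "step_moment L = 0"
  define P where "P = p (Suc L) + p L"
  have deg: "degree (p L) < degree (p (Suc L))"
    using monic_graded_degree[OF monic_graded_p] by simp
  have "typeII mu r (index (Suc L)) P"
    unfolding typeII_def
  proof (intro conjI allI impI)
    show "lead_coeff P = 1" "degree P = msize r (index (Suc L))"
      unfolding P_def msize_index using lead_coeff_add_le[OF deg] degree_add_eq_left[OF deg]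
      by (simp_all add: add.commute monic_graded_degree[OF monic_graded_p]
          monic_graded_lead_coeff[OF monic_graded_p])
    fix j k assume j: "j < r" and k: "k < index (Suc L) j"
    have "(\<integral>x. x ^ k * poly (p L) x \<partial>mu j) = 0"
    proof (cases "k < index L j")
      case False
      then have "j = i L" "k = index L (i L)"
        using k unfolding index_Suc by (auto split: if_splits)
      then show ?thesis
        using moment unfolding step_moment_def by simp
    qed (use j p_orthogonal in auto)
    then show "(\<integral>x. x ^ k * poly P x \<partial>mu j) = 0"
      unfolding P_def using j k p_orthogonal
      by (simp add: distrib_left integral_add integrable_power_mult_poly)
  qed
  then have "P = p (Suc L)"
    by (rule typeII_imp_eq_p)
  then show False
    using monic_graded_nonzero[OF monic_graded_p, of L] unfolding P_def by simp
qed

lemma typeI_shape_pairing_unique: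
  "typeI_shape L A \<Longrightarrow> (\<forall>k<L. pairing (p k) A = 0) \<Longrightarrow> A = (\<lambda>_. 0)"
proof (induction L arbitrary: A)
  case 0
  then have "coeff (A j) n = 0" for j n
    unfolding typeI_shape_def deg_lt_def pathv_def by (cases "r \<le> j") auto
  then show ?case
    by (auto simp: fun_eq_iff poly_eq_iff)
next
  case (Suc L)
  define c where "c = coeff (A (i L)) (index L (i L))"
  define A' where "A' = (\<lambda>j. A j - smult c (step_vector L j))"
  have "typeI_shape L A'"
    using Suc.prems(1) path
    by (auto simp: typeI_shape_def A'_def step_vector_def deg_lt_def index_Suc c_def coeff_monom
        split: if_splits)
  then have "c * step_moment L = 0"
    using pairing_p_typeI_shape[of L A'] Suc.prems(2)
    unfolding A'_def pairing_diff_right pairing_smult_right pairing_p_step_vector by simp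
  then have "A' = A"
    using step_moment_nonzero unfolding A'_def by simp
  then show ?case
    using Suc.IH \<open>typeI_shape L A'\<close> Suc.prems(2) by simp
qed

lemma typeI_shape_pairing_exists: "\<exists>A. typeI_shape L A \<and> (\<forall>k<L. pairing (p k) A = t k)"
proof (induction L arbitrary: t)
  case 0
  show ?case
    by (intro exI[of _ "\<lambda>_. 0"]) (simp add: typeI_shape_def)
next
  case (Suc L)
  define c where "c = t L / step_moment L"
  obtain A where A: "typeI_shape L A" "\<forall>k<L. pairing (p k) A = t k - c * pairing (p k) (step_vector L)"
    using Suc.IH[of "\<lambda>k. t k - c * pairing (p k) (step_vector L)"] by blast
  have "typeI_shape (Suc L) (\<lambda>j. A j + smult c (step_vector L j))"
    by (intro typeI_shape_add typeI_shape_smult typeI_shape_step_vector typeI_shape_mono[OF A(1)]) simp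
  moreover have "pairing (p k) (\<lambda>j. A j + smult c (step_vector L j)) = t k" if "k < Suc L" for k
    using that A(2) pairing_p_typeI_shape[OF A(1)] step_moment_nonzero[of L]
    unfolding pairing_add_right pairing_smult_right
    by (cases "k = L") (simp_all add: c_def pairing_p_step_vector)
  ultimately show ?case
    by blast
qed

lemma typeI_iff:
  "typeI mu r (index L) A \<longleftrightarrow>
     typeI_shape L A \<and> (\<forall>k<L. pairing (monom 1 k) A = (if k = L - 1 then 1 else 0))"
proof -
  have "pairing (monom 1 k) A = (\<Sum>j<r. \<integral>x. x ^ k * poly (A j) x \<partial>mu j)" for k
    unfolding pairing_def by (simp add: poly_monom)
  then show ?thesis
    unfolding typeI_def typeI_shape_def msize_index deg_lt_iff by (simp only: conj_assoc)
qed

lemma pairing_p_eq_monom: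
  assumes "\<forall>k'<k. pairing (monom 1 k') A = 0"
  shows "pairing (p k) A = pairing (monom 1 k) A"
proof -
  have "pairing (p k) A = pairing (monom 1 k) A + (\<Sum>k'<k. coeff (p k) k' * pairing (monom 1 k') A)"
    using monic_graded_degree[OF monic_graded_p, of k] monic_graded_lead_coeff[OF monic_graded_p, of k]
    by (simp add: pairing_expand[of "p k"] lessThan_Suc_atMost[symmetric])
  then show ?thesis
    using assms by simp
qed

lemma pairing_p_delta_iff_monom_delta:
  "(\<forall>k<Suc L. pairing (p k) A = (if k = L then 1 else 0)) \<longleftrightarrow>
   (\<forall>k<Suc L. pairing (monom 1 k) A = (if k = L then 1 else 0))"
proof
  assume p_delta: "\<forall>k<Suc L. pairing (p k) A = (if k = L then 1 else 0)"
  have "pairing (monom 1 k) A = (if k = L then 1 else 0)" if "k < Suc L" for k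
    using that
  proof (induction k rule: less_induct)
    case (less k)
    then have "\<forall>k'<k. pairing (monom 1 k') A = 0"
      by auto
    then show ?case
      using pairing_p_eq_monom p_delta less.prems by metis
  qed
  then show "\<forall>k<Suc L. pairing (monom 1 k) A = (if k = L then 1 else 0)"
    by blast
next
  assume monom_delta: "\<forall>k<Suc L. pairing (monom 1 k) A = (if k = L then 1 else 0)"
  have "pairing (p k) A = pairing (monom 1 k) A" if "k < Suc L" for k
    using that monom_delta by (intro pairing_p_eq_monom) auto
  then show "\<forall>k<Suc L. pairing (p k) A = (if k = L then 1 else 0)"
    using monom_delta by simp
qed

lemma ex1_typeI: "\<exists>!A. typeI mu r (index (Suc L)) A"
proof -
  let ?delta = "\<lambda>k. if k = L then 1 else 0 :: real"
  obtain A where A: "typeI_shape (Suc L) A" "\<forall>k<Suc L. pairing (p k) A = ?delta k"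
    using typeI_shape_pairing_exists[of "Suc L" ?delta] by blast
  show ?thesis
  proof (rule ex1I)
    show "typeI mu r (index (Suc L)) A"
      using A pairing_p_delta_iff_monom_delta unfolding typeI_iff by simp
  next
    fix B assume "typeI mu r (index (Suc L)) B"
    then have B: "typeI_shape (Suc L) B" "\<forall>k<Suc L. pairing (p k) B = ?delta k"
      using pairing_p_delta_iff_monom_delta unfolding typeI_iff by simp_all
    have "(\<lambda>j. B j - A j) = (\<lambda>_. 0)"
      using A B by (intro typeI_shape_pairing_unique typeI_shape_diff) (auto simp: pairing_diff_right)
    then show "B = A"
      by (simp add: fun_eq_iff)
  qed
qed

abbreviation Avec :: "nat \<Rightarrow> nat \<Rightarrow> real poly" where
  "Avec l \<equiv> AI mu r (index (Suc l))"

lemma typeI_Avec: "typeI mu r (index (Suc l)) (Avec l)"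
  unfolding AI_def by (rule theI'[OF ex1_typeI])

lemma pairing_p_Avec: "pairing (p k) (Avec l) = (if k = l then 1 else 0)"
proof (cases "k \<le> l")
  case True
  have "\<forall>k<Suc l. pairing (p k) (Avec l) = (if k = l then 1 else 0)"
    using typeI_Avec[of l] pairing_p_delta_iff_monom_delta unfolding typeI_iff by simp
  then show ?thesis
    using True by simp
next
  case False
  then have "typeI_shape k (Avec l)"
    using typeI_Avec[of l] typeI_shape_mono unfolding typeI_iff by auto
  then show ?thesis
    using False pairing_p_typeI_shape by auto
qed

lemma ex1_recurrence_row:
  "\<exists>!c. (\<forall>k>Suc l. c k = 0) \<and> [:0, 1:] * p l = (\<Sum>k\<le>Suc l. smult (c k) (p k))"
proof -
  have "deg_lt (Suc (Suc l)) ([:0, 1:] * p l)"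
    using monic_graded_degree[OF monic_graded_p, of l] monic_graded_nonzero[OF monic_graded_p, of l]
    by (simp add: deg_lt_iff)
  then obtain c where c: "[:0, 1:] * p l = (\<Sum>k<Suc (Suc l). smult (c k) (p k))"
    using monic_graded_span[OF monic_graded_p] by blast
  show ?thesis
  proof (rule ex1I[where a="\<lambda>k. if k \<le> Suc l then c k else 0"])
    show "(\<forall>k>Suc l. (\<lambda>k. if k \<le> Suc l then c k else 0) k = 0) \<and>
        [:0, 1:] * p l = (\<Sum>k\<le>Suc l. smult ((\<lambda>k. if k \<le> Suc l then c k else 0) k) (p k))"
      unfolding c lessThan_Suc_atMost by simp
  next
    fix d
    assume d: "(\<forall>k>Suc l. d k = 0) \<and> [:0, 1:] * p l = (\<Sum>k\<le>Suc l. smult (d k) (p k))"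
    then have "(\<Sum>k<Suc (Suc l). smult (d k - c k) (p k)) = 0"
      unfolding c lessThan_Suc_atMost by (simp add: smult_diff_left sum_subtractf)
    then have "d k = (if k \<le> Suc l then c k else 0)" for k
      using monic_graded_independent[OF monic_graded_p, of "\<lambda>k. d k - c k" "Suc (Suc l)" k] d
      by (cases "k \<le> Suc l") auto
    then show "d = (\<lambda>k. if k \<le> Suc l then c k else 0)"
      by blast
  qed
qed

lemma Jm_recurrence_row:
  "(\<forall>k>Suc l. Jm mu r i l k = 0) \<and> [:0, 1:] * p l = (\<Sum>k\<le>Suc l. smult (Jm mu r i l k) (p k))"
  unfolding Jm_def by (rule theI'[OF ex1_recurrence_row])

lemma lower_hessenberg_Jm: "lower_hessenberg (Jm mu r i)"
  unfolding lower_hessenberg_def using Jm_recurrence_row by blast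

lemma hessenberg_recurrence_Jm: "hessenberg_recurrence p (Jm mu r i)"
  unfolding hessenberg_recurrence_def lessThan_Suc_atMost using Jm_recurrence_row by blast

end

section \<open>The normalized zero counting measure\<close>

context mop_path
begin

abbreviation nu :: "nat \<Rightarrow> (real \<Rightarrow> real) \<Rightarrow> real" where
  "nu N f \<equiv> nu_int mu r i N f"

definition zeros_in :: "real set \<Rightarrow> nat \<Rightarrow> bool" where
  "zeros_in K N \<longleftrightarrow> (\<forall>w. poly (map_poly complex_of_real (p N)) w = 0 \<longrightarrow> w \<in> complex_of_real ` K)"

lemma zeros_in_imp_newton_poly:
  assumes "zeros_in K N"
  obtains z where "\<forall>t<N. z t \<in> K" "p N = newton_poly z N"
  using monic_real_poly_splits[of "p N" K] assms
    monic_graded_degree[OF monic_graded_p] monic_graded_lead_coeff[OF monic_graded_p]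
  unfolding zeros_in_def by metis

lemma nu_eq_average: "p N = newton_poly z N \<Longrightarrow> nu N f = (\<Sum>t<N. f (z t)) / real N"
  unfolding nu_int_def using sum_zeros_newton_poly[of z N f] by simp

lemma nu_lincomb: "nu N (\<lambda>x. \<Sum>q\<in>Q. a q * f q x) = (\<Sum>q\<in>Q. a q * nu N (f q))"
  unfolding nu_int_def
  by (simp add: sum_distrib_left sum_divide_distrib mult_ac sum.swap[of _ Q])

text \<open>The power sums of the zeros of \<open>p\<^sub>N\<close> are traces of powers of the truncated recurrence
  matrix, both being the trace of multiplication by \<open>x\<^sup>m\<close> modulo \<open>p\<^sub>N\<close>.\<close>
lemma nu_power:
  assumes "zeros_in K N"
  shows "nu N (\<lambda>x. x ^ m) = (\<Sum>l<N. trunc_pow (Jm mu r i) N m l l) / real N"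
proof -
  obtain z where z: "p N = newton_poly z N"
    using zeros_in_imp_newton_poly[OF assms] by blast
  have "p N \<noteq> 0" and "degree (p N) = N"
    using monic_graded_nonzero[OF monic_graded_p] monic_graded_degree[OF monic_graded_p] by auto
  have "nu N (\<lambda>x. x ^ m) = (\<Sum>t<N. z t ^ m) / real N"
    by (rule nu_eq_average[OF z])
  also have "(\<Sum>t<N. z t ^ m) = basis_trace (newton_poly z) N (mult_xpow_mod (p N) m)"
    unfolding z by (rule basis_trace_mult_xpow_mod_newton_poly[symmetric])
  also have "\<dots> = basis_trace p N (mult_xpow_mod (p N) m)"
    using basis_trace_change_basis[OF monic_graded_newton_poly monic_graded_p]
      mult_xpow_mod_deg_lt[OF \<open>p N \<noteq> 0\<close>] mult_xpow_mod_add mult_xpow_mod_smult \<open>degree (p N) = N\<close>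
    by metis
  also have "\<dots> = (\<Sum>l<N. trunc_pow (Jm mu r i) N m l l)"
    by (rule basis_trace_mult_xpow_mod_recurrence[OF lower_hessenberg_Jm hessenberg_recurrence_Jm monic_graded_p])
  finally show ?thesis .
qed

lemma nu_approx:
  assumes "zeros_in K N" "N > 0" "\<forall>x\<in>K. \<bar>f x - g x\<bar> \<le> \<delta>"
  shows "\<bar>nu N f - nu N g\<bar> \<le> \<delta>"
proof -
  obtain z where z: "\<forall>t<N. z t \<in> K" "p N = newton_poly z N"
    using zeros_in_imp_newton_poly[OF assms(1)] by blast
  have "\<bar>(\<Sum>t<N. f (z t)) - (\<Sum>t<N. g (z t))\<bar> \<le> (\<Sum>t<N. \<bar>f (z t) - g (z t)\<bar>)"
    by (simp add: sum_subtractf[symmetric] sum_abs)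
  also have "\<dots> \<le> real N * \<delta>"
    using z(1) assms(3) sum_mono[of "{..<N}" "\<lambda>t. \<bar>f (z t) - g (z t)\<bar>" "\<lambda>_. \<delta>"] by auto
  finally show ?thesis
    unfolding nu_eq_average[OF z(2)] using assms(2)
    by (simp add: diff_divide_distrib[symmetric] divide_le_eq mult.commute)
qed

end

lemma borel_measurable_poly [measurable]: "(\<lambda>x. poly (p :: real poly) x) \<in> borel_measurable borel"
  by (intro borel_measurable_continuous_onI continuous_on_poly continuous_on_id)

lemma set_integral_eq_integral_AE:
  fixes f :: "'a \<Rightarrow> real"
  assumes "K \<in> sets M" "emeasure M (space M - K) = 0" "f \<in> borel_measurable M"
  shows "(LINT x:K|M. f x) = (\<integral>x. f x \<partial>M)"
proof -
  have "AE x in M. x \<in> K"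
    using assms(1,2) by (intro AE_I'[of "space M - K"]) (auto simp: null_sets_def)
  then show ?thesis
    unfolding set_lebesgue_integral_def
    using assms(1,3) by (intro integral_cong_AE) (auto simp: indicator_def)
qed

lemma set_integrable_mult_continuous_on_compact:
  fixes k f :: "'a::metric_space \<Rightarrow> real"
  assumes "sets M = sets borel" "integrable M k" "compact K" "continuous_on K f"
  shows "set_integrable M K (\<lambda>x. k x * f x)"
proof -
  obtain B where B: "\<And>x. x \<in> K \<Longrightarrow> \<bar>f x\<bar> \<le> B"
    using compact_imp_bounded[OF compact_continuous_image[OF assms(4,3)]]
    unfolding bounded_real by auto
  have "(\<lambda>x. indicator K x *\<^sub>R f x) \<in> borel_measurable M"
    using borel_measurable_continuous_on_indicator[OF borel_compact[OF assms(3)] assms(4)]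
      measurable_cong_sets[OF assms(1) refl] by blast
  then have meas: "(\<lambda>x. indicator K x *\<^sub>R (k x * f x)) \<in> borel_measurable M"
    using borel_measurable_integrable[OF assms(2)] by (simp add: borel_measurable_times mult.left_commute)
  have bound: "\<bar>indicator K x *\<^sub>R (k x * f x)\<bar> \<le> \<bar>B * k x\<bar>" for x
  proof (cases "x \<in> K")
    case True
    then have "\<bar>f x\<bar> * \<bar>k x\<bar> \<le> B * \<bar>k x\<bar>"
      using B by (intro mult_right_mono) auto
    then show ?thesis
      using True B[OF True] by (simp add: abs_mult mult.commute)
  qed simp
  show ?thesis
    unfolding set_integrable_def
  proof (rule Bochner_Integration.integrable_bound[OF _ meas])
    show "integrable M (\<lambda>x. B * k x)"
      using assms(2) by simp
    show "AE x in M. norm (indicator K x *\<^sub>R (k x * f x)) \<le> norm (B * k x)"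
      using bound by simp
  qed
qed

lemma set_integral_mult_approx:
  fixes k f g :: "'a \<Rightarrow> real"
  assumes "integrable M k" "set_integrable M K (\<lambda>x. k x * f x)" "set_integrable M K (\<lambda>x. k x * g x)"
    and "\<forall>x\<in>K. \<bar>f x - g x\<bar> \<le> \<delta>" "\<delta> \<ge> 0"
  shows "\<bar>(LINT x:K|M. k x * f x) - (LINT x:K|M. k x * g x)\<bar> \<le> \<delta> * (\<integral>x. \<bar>k x\<bar> \<partial>M)"
proof -
  have "(LINT x:K|M. k x * f x) - (LINT x:K|M. k x * g x) = (LINT x:K|M. k x * f x - k x * g x)"
    using assms(2,3) by simp
  also have "\<bar>\<dots>\<bar> \<le> (\<integral>x. \<bar>indicator K x *\<^sub>R (k x * f x - k x * g x)\<bar> \<partial>M)"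
    unfolding set_lebesgue_integral_def by (rule integral_abs_bound)
  also have "\<dots> \<le> (\<integral>x. \<delta> * \<bar>k x\<bar> \<partial>M)"
  proof (rule integral_mono)
    show "integrable M (\<lambda>x. \<bar>indicator K x *\<^sub>R (k x * f x - k x * g x)\<bar>)"
      using set_integral_diff(1)[OF assms(2,3)] unfolding set_integrable_def by (rule integrable_abs)
    show "\<bar>indicator K x *\<^sub>R (k x * f x - k x * g x)\<bar> \<le> \<delta> * \<bar>k x\<bar>" for x
    proof (cases "x \<in> K")
      case True
      then have "\<bar>f x - g x\<bar> * \<bar>k x\<bar> \<le> \<delta> * \<bar>k x\<bar>"
        using assms(4) by (intro mult_right_mono) auto
      moreover have "\<bar>k x * f x - k x * g x\<bar> = \<bar>f x - g x\<bar> * \<bar>k x\<bar>"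
        by (simp add: abs_mult[symmetric] algebra_simps)
      ultimately show ?thesis
        using True by simp
    qed (use assms(5) in simp)
  qed (use assms(1) in auto)
  finally show ?thesis
    by simp
qed

lemma integrable_abs_le_of_nn_integral_le:
  fixes f :: "'a \<Rightarrow> real"
  assumes "f \<in> borel_measurable M" "(\<integral>\<^sup>+ x. ennreal \<bar>f x\<bar> \<partial>M) \<le> ennreal c" "c \<ge> 0"
  shows "integrable M f" "(\<integral>x. \<bar>f x\<bar> \<partial>M) \<le> c"
proof -
  show f: "integrable M f"
    using assms(1,2) by (intro integrableI_bounded) (auto simp: le_less_trans[OF assms(2)])
  have "ennreal (\<integral>x. \<bar>f x\<bar> \<partial>M) = (\<integral>\<^sup>+ x. ennreal \<bar>f x\<bar> \<partial>M)"
    using f by (intro nn_integral_eq_integral[symmetric]) auto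
  then have "ennreal (\<integral>x. \<bar>f x\<bar> \<partial>M) \<le> ennreal c"
    using assms(2) by simp
  then show "(\<integral>x. \<bar>f x\<bar> \<partial>M) \<le> c"
    using assms(3) ennreal_le_iff by blast
qed

lemma tendsto_zero_by_polynomial_approximation:
  fixes \<Phi> :: "nat \<Rightarrow> (real \<Rightarrow> real) \<Rightarrow> real"
  assumes "compact K" "continuous_on K f"
    and polynomial: "\<And>g. real_polynomial_function g \<Longrightarrow> (\<lambda>k. \<Phi> k g) \<longlonglongrightarrow> 0"
    and approx: "\<And>k g \<delta>. real_polynomial_function g \<Longrightarrow> \<delta> > 0 \<Longrightarrow> \<forall>x\<in>K. \<bar>f x - g x\<bar> \<le> \<delta> \<Longrightarrow>
        \<bar>\<Phi> k f - \<Phi> k g\<bar> \<le> C * \<delta>"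
  shows "(\<lambda>k. \<Phi> k f) \<longlonglongrightarrow> 0"
proof (rule tendstoI)
  fix \<epsilon> :: real assume "\<epsilon> > 0"
  define \<delta> where "\<delta> = \<epsilon> / (2 * (\<bar>C\<bar> + 1))"
  have \<delta>: "\<delta> > 0" "C * \<delta> \<le> \<epsilon> / 2"
    using \<open>\<epsilon> > 0\<close> by (auto simp: \<delta>_def field_simps abs_if)
  obtain g where g: "real_polynomial_function g" "\<And>x. x \<in> K \<Longrightarrow> \<bar>f x - g x\<bar> < \<delta>"
    using Stone_Weierstrass_real_polynomial_function[OF assms(1,2) \<delta>(1)] by blast
  have "\<forall>\<^sub>F k in sequentially. \<bar>\<Phi> k g\<bar> < \<epsilon> / 2"
    using tendstoD[OF polynomial[OF g(1)], of "\<epsilon> / 2"] \<open>\<epsilon> > 0\<close> by simp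
  then show "\<forall>\<^sub>F k in sequentially. dist (\<Phi> k f) 0 < \<epsilon>"
  proof eventually_elim
    case (elim k)
    have "\<bar>\<Phi> k f - \<Phi> k g\<bar> \<le> C * \<delta>"
      using g \<delta>(1) by (intro approx) (auto intro: less_imp_le)
    then show ?case
      using elim \<delta>(2) by simp
  qed
qed

lemma tendsto_iff_of_diff_tendsto_zero:
  fixes a b :: "nat \<Rightarrow> 'a \<Rightarrow> real"
  assumes "\<And>f. P f \<Longrightarrow> (\<lambda>k. a k f - b k f) \<longlonglongrightarrow> 0"
  shows "(\<forall>f. P f \<longrightarrow> (\<lambda>k. a k f) \<longlonglongrightarrow> L f) \<longleftrightarrow> (\<forall>f. P f \<longrightarrow> (\<lambda>k. b k f) \<longlonglongrightarrow> L f)"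
proof -
  have "(\<lambda>k. a k f) \<longlonglongrightarrow> L f \<longleftrightarrow> (\<lambda>k. b k f) \<longlonglongrightarrow> L f" if "P f" for f
    using tendsto_diff[OF _ assms[OF that], of "\<lambda>k. a k f" "L f"]
      tendsto_add[OF _ assms[OF that], of "\<lambda>k. b k f" "L f"]
    by auto
  then show ?thesis
    by blast
qed

section \<open>The measure \<open>\<eta>\<^sub>n\<close>\<close>

locale mop_path_density = mop_path r mu i
  for r :: nat and mu :: "nat \<Rightarrow> real measure" and i :: "nat \<Rightarrow> nat" +
  fixes M :: "real measure" and w :: "nat \<Rightarrow> real \<Rightarrow> real"
  assumes sets_M: "sets M = sets borel"
    and w_measurable: "\<And>j. j < r \<Longrightarrow> w j \<in> borel_measurable borel"
    and w_nonneg: "\<And>j x. j < r \<Longrightarrow> w j x \<ge> 0"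
    and mu_density: "\<And>j. j < r \<Longrightarrow> mu j = density M (\<lambda>x. ennreal (w j x))"
begin

abbreviation kernel :: "nat \<Rightarrow> real \<Rightarrow> real" where
  "kernel N x \<equiv> CD mu w r i N x x"

abbreviation eta :: "real set \<Rightarrow> nat \<Rightarrow> (real \<Rightarrow> real) \<Rightarrow> real" where
  "eta K N f \<equiv> eta_int M mu w r i K N f"

lemma space_M: "space M = UNIV"
  using sets_eq_imp_space_eq[OF sets_M] by simp

lemma measurable_M: "f \<in> borel_measurable borel \<Longrightarrow> f \<in> borel_measurable M"
  using measurable_cong_sets[OF sets_M refl] by blast

lemma integrable_w_poly: "j < r \<Longrightarrow> integrable M (\<lambda>x. w j x * poly Q x)"
  using integrable_poly[of j Q] mu_density[of j] w_nonneg[of j]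
    integrable_density[OF measurable_M[OF borel_measurable_poly] measurable_M[OF w_measurable]]
  by simp

lemma integral_w_poly: "j < r \<Longrightarrow> (\<integral>x. w j x * poly Q x \<partial>M) = (\<integral>x. poly Q x \<partial>mu j)"
  using mu_density[of j] w_nonneg[of j]
    integral_density[OF measurable_M[OF borel_measurable_poly] measurable_M[OF w_measurable]]
  by simp

lemma kernel_measurable: "kernel N \<in> borel_measurable M"
  unfolding CD_def qq_def QI_def
  by (intro borel_measurable_sum borel_measurable_times measurable_M borel_measurable_poly w_measurable)
    simp

lemma kernel_mult_power:
  "kernel N x * x ^ m = (\<Sum>l<N. \<Sum>j<r. w j x * poly (monom 1 m * p l * Avec l j) x)"
  unfolding CD_def qq_def QI_def
  by (simp add: sum_distrib_left sum_distrib_right poly_mult poly_monom mult_ac)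

lemma integrable_kernel_mult_power: "integrable M (\<lambda>x. kernel N x * x ^ m)"
  unfolding kernel_mult_power by (intro Bochner_Integration.integrable_sum integrable_w_poly) simp

lemma pairing_xpow_p_Avec: "pairing (monom 1 m * p l) (Avec l) = hessenberg_pow (Jm mu r i) m l l"
proof -
  have "pairing (monom 1 m * p l) (Avec l)
      = (\<Sum>k<Suc (l + m). hessenberg_pow (Jm mu r i) m l k * pairing (p k) (Avec l))"
    unfolding xpow_mult_recurrence[OF lower_hessenberg_Jm hessenberg_recurrence_Jm] by (rule pairing_sum_left)
  also have "\<dots> = (\<Sum>k<Suc (l + m). if k = l then hessenberg_pow (Jm mu r i) m l k else 0)"
    by (intro sum.cong) (simp_all add: pairing_p_Avec)
  finally show ?thesis
    by (simp add: sum.delta del: sum.lessThan_Suc)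
qed

text \<open>By biorthogonality, the moments of \<open>K\<^sub>N(x,x) d\<mu>\<close> are the partial traces of \<open>J\<^sup>m\<close>.\<close>
lemma integral_kernel_mult_power:
  "(\<integral>x. kernel N x * x ^ m \<partial>M) = (\<Sum>l<N. hessenberg_pow (Jm mu r i) m l l)"
proof -
  have "(\<integral>x. kernel N x * x ^ m \<partial>M)
      = (\<Sum>l<N. \<integral>x. (\<Sum>j<r. w j x * poly (monom 1 m * p l * Avec l j) x) \<partial>M)"
    unfolding kernel_mult_power
    by (rule Bochner_Integration.integral_sum) (intro Bochner_Integration.integrable_sum integrable_w_poly, simp)
  also have "\<dots> = (\<Sum>l<N. \<Sum>j<r. \<integral>x. w j x * poly (monom 1 m * p l * Avec l j) x \<partial>M)"
    by (intro sum.cong refl Bochner_Integration.integral_sum integrable_w_poly) simp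
  also have "\<dots> = (\<Sum>l<N. pairing (monom 1 m * p l) (Avec l))"
    unfolding pairing_def
  proof (intro sum.cong refl)
    fix l j assume "j \<in> {..<r}"
    then show "(\<integral>x. w j x * poly (monom 1 m * p l * Avec l j) x \<partial>M)
        = (\<integral>x. poly (monom 1 m * p l) x * poly (Avec l j) x \<partial>mu j)"
      using integral_w_poly[of j "monom 1 m * p l * Avec l j"] by (simp add: poly_mult)
  qed
  finally show ?thesis
    by (simp add: pairing_xpow_p_Avec)
qed

lemma eta_eq_integral:
  assumes "K \<in> sets borel" "emeasure M (UNIV - K) = 0" "f \<in> borel_measurable M"
  shows "eta K N f = (\<integral>x. kernel N x * f x \<partial>M) / real N"
  unfolding eta_int_def using assms kernel_measurable sets_M space_M
  by (subst set_integral_eq_integral_AE) auto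

lemma eta_power:
  assumes "K \<in> sets borel" "emeasure M (UNIV - K) = 0"
  shows "eta K N (\<lambda>x. x ^ m) = (\<Sum>l<N. hessenberg_pow (Jm mu r i) m l l) / real N"
proof -
  have "(\<lambda>x. x ^ m) \<in> borel_measurable M"
    by (intro measurable_M borel_measurable_continuous_onI continuous_intros)
  then show ?thesis
    by (simp add: eta_eq_integral[OF assms] integral_kernel_mult_power)
qed

lemma eta_polynomial:
  assumes "K \<in> sets borel" "emeasure M (UNIV - K) = 0"
  shows "eta K N (\<lambda>x. \<Sum>q\<le>d. a q * x ^ q) = (\<Sum>q\<le>d. a q * eta K N (\<lambda>x. x ^ q))"
proof -
  have "(\<integral>x. kernel N x * (\<Sum>q\<le>d. a q * x ^ q) \<partial>M) = (\<Sum>q\<le>d. a q * (\<integral>x. kernel N x * x ^ q \<partial>M))"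
    by (simp add: sum_distrib_left mult.left_commute integrable_kernel_mult_power)
  then show ?thesis
    using assms by (simp add: eta_eq_integral measurable_M sum_divide_distrib)
qed

lemma eta_approx:
  assumes "compact K" "continuous_on K f" "continuous_on K g" "\<forall>x\<in>K. \<bar>f x - g x\<bar> \<le> \<delta>" "\<delta> \<ge> 0"
    and "integrable M (kernel N)" "(\<integral>x. \<bar>kernel N x\<bar> \<partial>M) \<le> B" "N > 0"
  shows "\<bar>eta K N f - eta K N g\<bar> \<le> \<delta> * B / real N"
proof -
  have "\<bar>(LINT x:K|M. kernel N x * f x) - (LINT x:K|M. kernel N x * g x)\<bar> \<le> \<delta> * B"
    using set_integral_mult_approx[OF assms(6) _ _ assms(4,5)]
      set_integrable_mult_continuous_on_compact[OF sets_M assms(6,1)] assms(2,3,5,7)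
    by (meson mult_left_mono order_trans)
  then show ?thesis
    unfolding eta_int_def using assms(8) by (simp add: diff_divide_distrib[symmetric] divide_right_mono)
qed

lemma nu_minus_eta_power_bounded:
  assumes "band_bounded (Jm mu r i)" "K \<in> sets borel" "emeasure M (UNIV - K) = 0"
  obtains C where "\<And>N. zeros_in K N \<Longrightarrow> \<bar>nu N (\<lambda>x. x ^ m) - eta K N (\<lambda>x. x ^ m)\<bar> \<le> C / real N"
proof -
  obtain C where C: "\<And>N. \<bar>(\<Sum>l<N. trunc_pow (Jm mu r i) N m l l) - (\<Sum>l<N. hessenberg_pow (Jm mu r i) m l l)\<bar> \<le> C"
    using trace_trunc_pow_minus_trace_bounded[OF lower_hessenberg_Jm assms(1)] by blast
  have "\<bar>nu N (\<lambda>x. x ^ m) - eta K N (\<lambda>x. x ^ m)\<bar> \<le> C / real N" if "zeros_in K N" for N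
    unfolding nu_power[OF that] eta_power[OF assms(2,3)] diff_divide_distrib[symmetric] abs_divide
    using C[of N] by (simp add: divide_right_mono)
  then show ?thesis
    using that by blast
qed

lemma nu_minus_eta_polynomial_tendsto_zero:
  assumes "band_bounded (Jm mu r i)" "K \<in> sets borel" "emeasure M (UNIV - K) = 0"
    and "filterlim (\<lambda>k. real (n k)) at_top sequentially" "\<And>k. zeros_in K (n k)"
    and "real_polynomial_function g"
  shows "(\<lambda>k. nu (n k) g - eta K (n k) g) \<longlonglongrightarrow> 0"
proof -
  obtain a d where g: "g = (\<lambda>x. \<Sum>q\<le>d. a q * x ^ q)"
    using assms(6) unfolding real_polynomial_function_iff_sum by blast
  have "(\<lambda>k. nu (n k) (\<lambda>x. x ^ q) - eta K (n k) (\<lambda>x. x ^ q)) \<longlonglongrightarrow> 0" for q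
  proof -
    obtain C where C: "\<And>N. zeros_in K N \<Longrightarrow> \<bar>nu N (\<lambda>x. x ^ q) - eta K N (\<lambda>x. x ^ q)\<bar> \<le> C / real N"
      using nu_minus_eta_power_bounded[OF assms(1-3)] by blast
    show ?thesis
    proof (rule Lim_null_comparison)
      show "(\<lambda>k. C / real (n k)) \<longlonglongrightarrow> 0"
        using tendsto_divide_0[OF tendsto_const filterlim_at_top_imp_at_infinity[OF assms(4)]] .
      show "\<forall>\<^sub>F k in sequentially. norm (nu (n k) (\<lambda>x. x ^ q) - eta K (n k) (\<lambda>x. x ^ q)) \<le> C / real (n k)"
        using C assms(5) by (intro always_eventually allI) simp
    qed
  qed
  then have "(\<lambda>k. \<Sum>q\<le>d. a q * (nu (n k) (\<lambda>x. x ^ q) - eta K (n k) (\<lambda>x. x ^ q))) \<longlonglongrightarrow> (\<Sum>q\<le>d. a q * 0)"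
    by (intro tendsto_sum tendsto_mult tendsto_const)
  then show ?thesis
    unfolding g nu_lincomb eta_polynomial[OF assms(2,3)]
    by (simp add: sum_subtractf right_diff_distrib)
qed

lemma nu_minus_eta_tendsto_zero:
  assumes "band_bounded (Jm mu r i)" "compact K" "emeasure M (UNIV - K) = 0"
    and "strict_mono n" "\<And>k. n k > 0" "\<And>k. zeros_in K (n k)"
    and "\<And>k. integrable M (kernel (n k))" "\<And>k. (\<integral>x. \<bar>kernel (n k) x\<bar> \<partial>M) \<le> C * real (n k)"
    and "continuous_on K f"
  shows "(\<lambda>k. nu (n k) f - eta K (n k) f) \<longlonglongrightarrow> 0"
proof (rule tendsto_zero_by_polynomial_approximation[OF assms(2,9)])
  have "filterlim (\<lambda>k. real (n k)) at_top sequentially"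
    using filterlim_subseq[OF assms(4)] filterlim_real_sequentially filterlim_compose by blast
  then show "(\<lambda>k. nu (n k) g - eta K (n k) g) \<longlonglongrightarrow> 0" if "real_polynomial_function g" for g
    by (rule nu_minus_eta_polynomial_tendsto_zero[OF assms(1) borel_compact[OF assms(2)] assms(3) _ assms(6) that])
  fix k g \<delta>
  assume g: "real_polynomial_function g" and "\<delta> > 0" and fg: "\<forall>x\<in>K. \<bar>f x - g x\<bar> \<le> \<delta>"
  have "\<bar>nu (n k) f - nu (n k) g\<bar> \<le> \<delta>"
    using nu_approx[OF assms(6,5) fg] .
  moreover have "\<bar>eta K (n k) f - eta K (n k) g\<bar> \<le> \<delta> * (C * real (n k)) / real (n k)"
    using continuous_on_polymonial_function[OF g[unfolded real_polynomial_function_eq]] \<open>\<delta> > 0\<close>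
    by (intro eta_approx[OF assms(2,9) _ fg _ assms(7,8,5)]) simp_all
  ultimately show "\<bar>(nu (n k) f - eta K (n k) f) - (nu (n k) g - eta K (n k) g)\<bar> \<le> (1 + C) * \<delta>"
    using assms(5)[of k] by (simp add: algebra_simps)
qed

end

theorem corollary1:
  fixes r :: nat and mu :: "nat \<Rightarrow> real measure" and M :: "real measure"
    and w :: "nat \<Rightarrow> real \<Rightarrow> real" and i :: "nat \<Rightarrow> nat"
    and n :: "nat \<Rightarrow> nat" and K :: "real set"
  assumes "r \<ge> 1"
    and "sets M = sets borel"
    and "\<forall>j<r. w j \<in> borel_measurable borel \<and> (\<forall>x. w j x \<ge> 0)"
    and "\<forall>j<r. mu j = density M (\<lambda>x. ennreal (w j x))"
    and "\<forall>j<r. \<forall>k::nat. integrable (mu j) (\<lambda>x. x ^ k)"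
    and "perfect_system mu r"
    and "\<forall>l. i l < r"
    and "\<forall>R::real. R \<ge> 0 \<longrightarrow> (\<exists>B. \<forall>a b. \<bar>real a - real b\<bar> \<le> R \<longrightarrow> \<bar>Jm mu r i a b\<bar> \<le> B)"
    and "strict_mono n" and "\<forall>k. n k > 0"
    and "compact K"
    and "emeasure M (UNIV - K) = 0"
    and "\<forall>k. \<forall>z::complex. poly (map_poly complex_of_real (pp mu r i (n k))) z = 0
            \<longrightarrow> z \<in> complex_of_real ` K"
    and "\<exists>C::real. \<forall>k. (\<integral>\<^sup>+ x. ennreal \<bar>CD mu w r i (n k) x x\<bar> \<partial>M) \<le> ennreal (C * real (n k))"
  shows "(\<forall>f::real \<Rightarrow> real. continuous_on K f \<longrightarrow>
            (\<lambda>k. \<bar>nu_int mu r i (n k) f - eta_int M mu w r i K (n k) f\<bar>) \<longlonglongrightarrow> 0)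
    \<and> (\<forall>\<nu>::real measure. prob_space \<nu> \<and> sets \<nu> = sets borel \<and> emeasure \<nu> (UNIV - K) = 0 \<longrightarrow>
         ((\<forall>f::real \<Rightarrow> real. continuous_on UNIV f \<and> bounded (range f) \<longrightarrow>
              (\<lambda>k. nu_int mu r i (n k) f) \<longlonglongrightarrow> integral\<^sup>L \<nu> f)
          \<longleftrightarrow>
          (\<forall>f::real \<Rightarrow> real. continuous_on UNIV f \<and> bounded (range f) \<longrightarrow>
              (\<lambda>k. eta_int M mu w r i K (n k) f) \<longlonglongrightarrow> integral\<^sup>L \<nu> f)))"
proof -
  interpret mop_path_density r mu i M w
    using assms(2-7) by unfold_locales auto
  obtain C where C: "\<And>k. (\<integral>\<^sup>+ x. ennreal \<bar>kernel (n k) x\<bar> \<partial>M) \<le> ennreal (max C 0 * real (n k))"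
    using assms(14) by (meson ennreal_leI max.cobounded1 mult_right_mono of_nat_0_le_iff order_trans)
  have kernel: "integrable M (kernel (n k))" "(\<integral>x. \<bar>kernel (n k) x\<bar> \<partial>M) \<le> max C 0 * real (n k)" for k
    using integrable_abs_le_of_nn_integral_le[OF kernel_measurable C] by auto
  have diff: "(\<lambda>k. nu (n k) f - eta K (n k) f) \<longlonglongrightarrow> 0" if "continuous_on K f" for f
  proof (rule nu_minus_eta_tendsto_zero[OF _ assms(11,12,9) _ _ kernel that])
    show "band_bounded (Jm mu r i)"
      using assms(8) unfolding band_bounded_def .
    show "n k > 0" "zeros_in K (n k)" for k
      using assms(10,13) unfolding zeros_in_def by blast+
  qed
  show ?thesis
  proof (intro conjI allI impI tendsto_iff_of_diff_tendsto_zero)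
    show "(\<lambda>k. \<bar>nu (n k) f - eta K (n k) f\<bar>) \<longlonglongrightarrow> 0" if "continuous_on K f" for f
      using diff[OF that] by (rule tendsto_rabs_zero)
  qed (use diff continuous_on_subset in blast)
qed

end
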